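(* Let $G$ be a finite group, let $p$ be a prime, and let $A$ be a subgroup of $G$ of maximum order among the self-centralizing subgroups of $G$ (i.e. among subgroups $B\le G$ with $C_G(B)=B$). Then: \begin{enumerate} \item If $G$ is abelian, then $\mathcal{CD}(G)=\{G\}$. \item If $|G:Z(G)|=p^2$, then $\mathcal{CD}(G)=\{Z(G),A,A_1,\dots,A_p,G\}$ is a quasi-antichain of width $p+1$, with each $A_i$ abelian. \item If $|G:A|=p$ and $|G:Z(G)|=p^i$ with $i>2$, then $\mathcal{CD}(G)=\{A\}$. Also, if $p$ is the smallest prime divisor of $|G|$, $|G:A|=p$ and $|G:Z(G)|>p^2$, then $\mathcal{CD}(G)=\{A\}$. \item Suppose $|G:A|=p^2$. \begin{enumerate} \item If $|G:Z(G)|=p^3$, then $\mathcal{CD}(G)=\{Z(G),G\}$. Also, if $p$ is the smallest prime divisor of $|G|$ and $p^2<|G:Z(G)|<p^4$, then $\mathcal{CD}(G)=\{Z(G),G\}$. \item If $|G:Z(G)|=p^4$, then $$\mathcal{CD}(G)=\{Z(G),Z(T_1),\dots,Z(T_n),A,A_1,\dots,A_m,T_1,\dots,T_n,G\},$$ where $T_1,\dots,T_n$ ($n\ge 0$) are all of the subgroups of index $p$ in $G$ whose centers have index $p^3$ in $G$, and $A_1,\dots,A_m$ ($m\ge 0$) are all of the subgroups of index $p^2$ in $G$, other than $A$, whose centralizers in $G$ have index $p^2$ in $G$. Furthermore, if $n\ge 1$ then $m\ge p$. \item If $|G:Z(G)|=p^i$ with $i>4$ and $G$ possesses a subgroup $T$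 of index $p$ in $G$ whose center has index $p^3$ in $G$, then $\mathcal{CD}(G)=\{Z(T),A,A_1,\dots,A_p,T\}$ is a quasi-antichain of width $p+1$, with each $A_i$ abelian. Also, if $p$ is the smallest prime divisor of $|G|$, $|G:Z(G)|>p^4$, and $G$ possesses a subgroup $T$ of index $p$ in $G$ whose center has index $p^3$ in $G$, then $\mathcal{CD}(G)=\{Z(T),A,A_1,\dots,A_p,T\}$ is a quasi-antichain of width $p+1$, with each $A_i$ abelian. \item If $|G:Z(G)|=p^i$ with $i>4$ and $G$ does not possess a subgroup of index $p$ in $G$ whose center has index $p^3$ in $G$, then $\mathcal{CD}(G)=\{A\}$. Also, if $p$ is the smallest prime divisor of $|G|$, $|G:Z(G)|>p^4$, and $G$ does not possess a subgroup of index $p$ in $G$ whose center has index $p^3$ in $G$, then $\mathcal{CD}(G)=\{A\}$. \end{enumerate} \end{enumerate}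
   Context: For a finite group $G$ and $H\le G$, the Chermak-Delgado measure is $m_G(H)=|H|\,|C_G(H)|$. Let $m^*(G)=\max\{m_G(H)\mid H\le G\}$ and $\mathcal{CD}(G)=\{H\le G\mid m_G(H)=m^*(G)\}$, the Chermak-Delgado lattice of $G$ (a sublattice of the subgroup lattice of $G$). A lattice is a quasi-antichain of width $w$ if it consists of a least element, a greatest element, and $w$ further pairwise incomparable elements. *)

theory Defs
  imports "HOL-Algebra.Algebra"
begin

definition centralizer :: "('a, 'b) monoid_scheme \<Rightarrow> 'a set \<Rightarrow> 'a set" where
  "centralizer G H = {g \<in> carrier G. \<forall>h\<in>H. g \<otimes>\<^bsub>G\<^esub> h = h \<otimes>\<^bsub>G\<^esub> g}"

definition grp_center :: "('a, 'b) monoid_scheme \<Rightarrow> 'a set" where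
  "grp_center G = {g \<in> carrier G. \<forall>h\<in>carrier G. g \<otimes>\<^bsub>G\<^esub> h = h \<otimes>\<^bsub>G\<^esub> g}"

definition sub_center :: "('a, 'b) monoid_scheme \<Rightarrow> 'a set \<Rightarrow> 'a set" where
  "sub_center G H = grp_center (G\<lparr>carrier := H\<rparr>)"

definition cd_measure :: "('a, 'b) monoid_scheme \<Rightarrow> 'a set \<Rightarrow> nat" where
  "cd_measure G H = card H * card (centralizer G H)"

definition cd_max :: "('a, 'b) monoid_scheme \<Rightarrow> nat" where
  "cd_max G = Max {cd_measure G H | H. subgroup H G}"

definition CD :: "('a, 'b) monoid_scheme \<Rightarrow> 'a set set" where
  "CD G = {H. subgroup H G \<and> cd_measure G H = cd_max G}"

definition quasi_antichain :: "'a set set \<Rightarrow> nat \<Rightarrow> bool" where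
  "quasi_antichain L w \<longleftrightarrow>
     (\<exists>lo hi. lo \<in> L \<and> hi \<in> L \<and> lo \<noteq> hi \<and>
        (\<forall>x\<in>L. lo \<subseteq> x \<and> x \<subseteq> hi) \<and>
        finite (L - {lo, hi}) \<and> card (L - {lo, hi}) = w \<and>
        (\<forall>x\<in>(L - {lo, hi}). \<forall>y\<in>(L - {lo, hi}). x \<subseteq> y \<longrightarrow> x = y))"

definition smallest_prime_divisor :: "nat \<Rightarrow> nat \<Rightarrow> bool" where
  "smallest_prime_divisor p n \<longleftrightarrow> Factorial_Ring.prime p \<and> p dvd n \<and> (\<forall>q::nat. Factorial_Ring.prime q \<longrightarrow> q dvd n \<longrightarrow> p \<le> q)"

end

(*
  Every member H of CD(G) satisfies C(C(H)) = H, so only centralizer-closed subgroups need to be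
  measured. The hypotheses on p enter only through the fact that a proper inclusion of subgroups
  containing Z(G) has index at least p; in particular |W : Z(W)| >= p^2 for every nonabelian
  subgroup W containing Z(G).

  Write n = |G|. A closed subgroup H is self-centralizing, whence m(H) <= |A|^2; or it is Z(G)
  or G, of measure n |Z(G)|; or m(H) <= n^2 / p^4. For the last bound, if H < C(H) apply the index
  gap to C(H) < G and to Z(C(H)) = H < C(H) (symmetrically if C(H) < H); if H and C(H) are
  incomparable, then D = H meet C(H) has index at least p^2 in both, and |H| |C(H)| <= n |D| by
  the product formula. Comparing |A|^2, n |Z(G)| and n^2 / p^4 under the hypotheses of each part,
  and analysing when n^2 / p^4 is attained, determines CD(G).

  The p + 1 incomparable members of the quasi-antichains are the subgroups strictly between a
  subgroup W and Y = Z(W), where Y contains Z(G) and |W : Y| = p^2: each of them is abelian, any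
  two of them meet in Y, and together they cover W, so there are (p^2 - 1)/(p - 1) of them.
*)

theory Submission
  imports Defs
begin

lemma nested_measure_bound:
  fixes p h k n :: nat
  assumes hk: "p^2 * h \<le> k" and kn: "p * k \<le> n"
  shows "p^4 * (h * k) \<le> n^2"
    and "p^4 * (h * k) = n^2 \<Longrightarrow> 0 < k \<Longrightarrow> 0 < p \<Longrightarrow> p^2 * h = k \<and> p * k = n"
proof -
  have expand: "p^4 * (h * k) = (p^2 * h) * (p^2 * k)"
    by (simp add: power2_eq_square power4_eq_xxxx algebra_simps)
  have sq: "k * (p^2 * k) = (p * k)^2"
    by (simp add: power2_eq_square algebra_simps)
  have le1: "(p^2 * h) * (p^2 * k) \<le> k * (p^2 * k)"
    using hk by (rule mult_le_mono1)
  have le2: "(p * k)^2 \<le> n^2"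
    using kn by (rule power_mono) simp
  show "p^4 * (h * k) \<le> n^2"
    using le1 le2 expand sq by linarith
  assume eq: "p^4 * (h * k) = n^2" and "0 < k" "0 < p"
  then have "0 < p^2 * k" by simp
  have "p^2 * h = k"
  proof (rule ccontr)
    assume "p^2 * h \<noteq> k"
    with hk have "(p^2 * h) * (p^2 * k) < k * (p^2 * k)"
      using \<open>0 < p^2 * k\<close> by (intro mult_less_mono1) auto
    then show False using le2 expand sq eq by linarith
  qed
  moreover have "p * k = n"
  proof (rule ccontr)
    assume "p * k \<noteq> n"
    with kn have "(p * k)^2 < n^2"
      by (intro power_strict_mono) auto
    then show False using le1 expand sq eq by linarith
  qed
  ultimately show "p^2 * h = k \<and> p * k = n" ..
qed

lemma meet_measure_bound:
  fixes p h k n d :: nat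
  assumes dh: "p^2 * d \<le> h" and dk: "p^2 * d \<le> k" and hkn: "h * k \<le> n * d" and "0 < d"
  shows "p^4 * (h * k) \<le> n^2"
    and "p^4 * (h * k) = n^2 \<Longrightarrow> 0 < p \<Longrightarrow>
           p^4 * d = n \<and> h = p^2 * d \<and> k = p^2 * d \<and> h * k = n * d"
proof -
  have sq: "(p^2 * d) * (p^2 * d) = (p^4 * d) * d"
    by (simp add: power2_eq_square power4_eq_xxxx algebra_simps)
  have low: "(p^2 * d) * (p^2 * d) \<le> h * k"
    using dh dk by (rule mult_le_mono)
  with hkn sq have "(p^4 * d) * d \<le> n * d" by linarith
  then have nd: "p^4 * d \<le> n" using \<open>0 < d\<close> by simp
  have "p^4 * (h * k) \<le> p^4 * (n * d)" using hkn by simp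
  also have "\<dots> = n * (p^4 * d)" by simp
  also have "\<dots> \<le> n * n" using nd by simp
  finally show "p^4 * (h * k) \<le> n^2" by (simp add: power2_eq_square)
  assume eq: "p^4 * (h * k) = n^2" and "0 < p"
  have "n * n = p^4 * (h * k)" using eq by (simp add: power2_eq_square)
  also have "\<dots> \<le> p^4 * (n * d)" using hkn by simp
  finally have "n * n \<le> n * (p^4 * d)" by simp
  then have "n \<le> p^4 * d" using \<open>0 < d\<close> \<open>0 < p\<close> by (cases "n = 0") auto
  with nd have n: "p^4 * d = n" by simp
  then have nd2: "n * d = p^4 * d * d" by simp
  have "(p^4 * d) * d \<le> h * k" using low sq by simp
  with hkn n have hk: "h * k = n * d" by simp
  have "0 < p^2 * d" using \<open>0 < p\<close> \<open>0 < d\<close> by simp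
  have h: "h = p^2 * d"
  proof (rule ccontr)
    assume "h \<noteq> p^2 * d"
    with dh have "p^2 * d < h" by simp
    moreover have "0 < k" using \<open>0 < p^2 * d\<close> dk by linarith
    ultimately have "(p^2 * d) * k < h * k" by (intro mult_less_mono1)
    moreover have "(p^2 * d) * (p^2 * d) \<le> (p^2 * d) * k" using dk by simp
    ultimately show False using hk nd2 sq by linarith
  qed
  have "k = p^2 * d"
  proof (rule ccontr)
    assume "k \<noteq> p^2 * d"
    with dk have "p^2 * d < k" by simp
    moreover have "0 < h" using \<open>0 < p^2 * d\<close> dh by linarith
    ultimately have "h * (p^2 * d) < h * k" by (intro mult_less_mono2)
    moreover have "(p^2 * d) * (p^2 * d) = h * (p^2 * d)" using h by simp
    ultimately show False using hk nd2 sq by linarith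
  qed
  with n h hk show "p^4 * d = n \<and> h = p^2 * d \<and> k = p^2 * d \<and> h * k = n * d" by simp
qed

lemma quasi_antichainI:
  assumes "lo \<noteq> hi" "lo \<notin> F" "hi \<notin> F" "lo \<subseteq> hi" "\<forall>B\<in>F. lo \<subseteq> B \<and> B \<subseteq> hi"
    and "finite F" "card F = w" "\<forall>B\<in>F. \<forall>B'\<in>F. B \<subseteq> B' \<longrightarrow> B = B'"
  shows "quasi_antichain ({lo, hi} \<union> F) w"
proof -
  have F: "{lo, hi} \<union> F - {lo, hi} = F" using assms(2,3) by blast
  have "lo \<in> {lo, hi} \<union> F \<and> hi \<in> {lo, hi} \<union> F \<and> lo \<noteq> hi \<and>
      (\<forall>x\<in>{lo, hi} \<union> F. lo \<subseteq> x \<and> x \<subseteq> hi) \<and>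
      finite ({lo, hi} \<union> F - {lo, hi}) \<and> card ({lo, hi} \<union> F - {lo, hi}) = w \<and>
      (\<forall>x\<in>{lo, hi} \<union> F - {lo, hi}. \<forall>y\<in>{lo, hi} \<union> F - {lo, hi}. x \<subseteq> y \<longrightarrow> x = y)"
    unfolding F using assms(1,4-8) by blast
  then show ?thesis unfolding quasi_antichain_def by blast
qed

section \<open>Centralizers and the product formula\<close>

context group
begin

lemma centralizer_subset_carrier: "centralizer G S \<subseteq> carrier G"
  unfolding centralizer_def by auto

lemma subgroup_centralizer:
  assumes S: "S \<subseteq> carrier G"
  shows "subgroup (centralizer G S) G"
proof (rule subgroupI)
  show "centralizer G S \<subseteq> carrier G" by (rule centralizer_subset_carrier)
  have "\<one> \<in> centralizer G S" using S unfolding centralizer_def by auto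
  then show "centralizer G S \<noteq> {}" by blast
next
  fix a assume "a \<in> centralizer G S"
  then have a: "a \<in> carrier G" and comm: "\<And>h. h \<in> S \<Longrightarrow> a \<otimes> h = h \<otimes> a"
    unfolding centralizer_def by auto
  have "inv a \<otimes> h = h \<otimes> inv a" if "h \<in> S" for h
  proof -
    have h: "h \<in> carrier G" using that S by auto
    have "inv a \<otimes> h = inv a \<otimes> (h \<otimes> a) \<otimes> inv a" using a h by (simp add: m_assoc)
    also have "\<dots> = inv a \<otimes> (a \<otimes> h) \<otimes> inv a" using comm that by simp
    also have "\<dots> = h \<otimes> inv a" using a h by (simp add: m_assoc[symmetric])
    finally show ?thesis .
  qed
  with a show "inv a \<in> centralizer G S" unfolding centralizer_def by auto
next
  fix a b assume "a \<in> centralizer G S" "b \<in> centralizer G S"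
  then have a: "a \<in> carrier G" and b: "b \<in> carrier G"
    and ca: "\<And>h. h \<in> S \<Longrightarrow> a \<otimes> h = h \<otimes> a" and cb: "\<And>h. h \<in> S \<Longrightarrow> b \<otimes> h = h \<otimes> b"
    unfolding centralizer_def by auto
  have "a \<otimes> b \<otimes> h = h \<otimes> (a \<otimes> b)" if "h \<in> S" for h
  proof -
    have h: "h \<in> carrier G" using that S by auto
    have "a \<otimes> b \<otimes> h = a \<otimes> (h \<otimes> b)" using a b h cb that by (simp add: m_assoc)
    also have "\<dots> = h \<otimes> (a \<otimes> b)" using a b h ca that by (simp add: m_assoc[symmetric])
    finally show ?thesis .
  qed
  with a b show "a \<otimes> b \<in> centralizer G S" unfolding centralizer_def by auto
qed

lemma centralizer_antimono: "S \<subseteq> T \<Longrightarrow> centralizer G T \<subseteq> centralizer G S"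
  unfolding centralizer_def by auto

lemma subset_centralizer_centralizer: "S \<subseteq> carrier G \<Longrightarrow> S \<subseteq> centralizer G (centralizer G S)"
  unfolding centralizer_def by auto

lemma centralizer_centralizer_centralizer:
  "S \<subseteq> carrier G \<Longrightarrow> centralizer G (centralizer G (centralizer G S)) = centralizer G S"
  by (meson centralizer_antimono subset_centralizer_centralizer centralizer_subset_carrier subset_antisym)

lemma centralizer_carrier: "centralizer G (carrier G) = grp_center G"
  unfolding grp_center_def centralizer_def by auto

lemma centralizer_grp_center: "centralizer G (grp_center G) = carrier G"
  unfolding grp_center_def centralizer_def by auto

lemma grp_center_subset_centralizer: "S \<subseteq> carrier G \<Longrightarrow> grp_center G \<subseteq> centralizer G S"
  unfolding grp_center_def centralizer_def by auto

lemma subgroup_grp_center: "subgroup (grp_center G) G"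
  using subgroup_centralizer[of "carrier G"] by (simp add: centralizer_carrier)

lemma sub_center_eq: "T \<subseteq> carrier G \<Longrightarrow> sub_center G T = T \<inter> centralizer G T"
  unfolding sub_center_def grp_center_def centralizer_def by auto

lemma subgroup_Int_centralizer: "subgroup H G \<Longrightarrow> subgroup (H \<inter> centralizer G H) G"
  using subgroups_Inter_pair subgroup_centralizer subgroup.subset by blast

lemma centralizer_sub_center: "T \<subseteq> carrier G \<Longrightarrow> T \<subseteq> centralizer G (sub_center G T)"
  unfolding sub_center_eq centralizer_def by auto

lemma Int_centralizer_singleton_psubset:
  assumes "x \<in> W" "x \<in> carrier G" "x \<notin> centralizer G W"
  shows "W \<inter> centralizer G {x} \<subset> W"
proof
  show "W \<inter> centralizer G {x} \<noteq> W"
  proof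
    assume "W \<inter> centralizer G {x} = W"
    then have "\<forall>w\<in>W. w \<otimes> x = x \<otimes> w" unfolding centralizer_def by auto
    with assms show False unfolding centralizer_def by auto
  qed
qed blast

lemma grp_center_if_centralizer_singleton:
  assumes x: "x \<in> carrier G" and C: "centralizer G {x} = carrier G"
  shows "x \<in> grp_center G"
proof -
  have "x \<otimes> h = h \<otimes> x" if "h \<in> carrier G" for h
  proof -
    have "h \<in> centralizer G {x}" using C that by simp
    then show ?thesis unfolding centralizer_def by simp
  qed
  with x show ?thesis unfolding grp_center_def by blast
qed

lemma comm_group_if_subset_centralizer:
  assumes B: "subgroup B G" and "B \<subseteq> centralizer G B"
  shows "comm_group (G\<lparr>carrier := B\<rparr>)"
proof -
  interpret B: group "G\<lparr>carrier := B\<rparr>" by (rule subgroup_imp_group[OF B])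
  show ?thesis
    by (rule B.group_comm_groupI) (use assms(2) in \<open>auto simp: centralizer_def\<close>)
qed

lemma centralizer_Int_subset_grp_center:
  assumes "H \<subseteq> carrier G" "K \<subseteq> carrier G" and HK: "H <#> K = carrier G"
  shows "centralizer G H \<inter> centralizer G K \<subseteq> grp_center G"
proof
  fix d assume d: "d \<in> centralizer G H \<inter> centralizer G K"
  then have dc: "d \<in> carrier G" unfolding centralizer_def by auto
  have "d \<otimes> g = g \<otimes> d" if "g \<in> carrier G" for g
  proof -
    have "g \<in> H <#> K" using that HK by simp
    then obtain h k where hk: "h \<in> H" "k \<in> K" and g: "g = h \<otimes> k"
      unfolding set_mult_def by blast
    with assms have hc: "h \<in> carrier G" and kc: "k \<in> carrier G" by auto
    have dh: "d \<otimes> h = h \<otimes> d" and dk: "d \<otimes> k = k \<otimes> d"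
      using d hk unfolding centralizer_def by auto
    have "d \<otimes> (h \<otimes> k) = h \<otimes> d \<otimes> k" using dh dc hc kc by (simp add: m_assoc[symmetric])
    also have "\<dots> = h \<otimes> k \<otimes> d" using dk dc hc kc by (simp add: m_assoc)
    finally show ?thesis using g by simp
  qed
  with dc show "d \<in> grp_center G" unfolding grp_center_def by auto
qed

lemma set_mult_subset_subgroup: "subgroup L G \<Longrightarrow> H \<subseteq> L \<Longrightarrow> K \<subseteq> L \<Longrightarrow> H <#> K \<subseteq> L"
  by (metis mono_set_mult subgroup_mult_id)

lemma card_mult_Int_ge:
  assumes fin: "finite (carrier G)" and H: "subgroup H G" and K: "subgroup K G"
  shows "card H * card K \<le> card (H <#> K) * card (H \<inter> K)"
proof -
  let ?f = "\<lambda>(h, k). h \<otimes> k"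
  let ?fibre = "\<lambda>g. {x \<in> H \<times> K. ?f x = g}"
  have Hc: "H \<subseteq> carrier G" and Kc: "K \<subseteq> carrier G" using H K subgroup.subset by auto
  have fH: "finite H" and fK: "finite K" using Hc Kc fin finite_subset by auto
  have HK: "H <#> K = ?f ` (H \<times> K)" unfolding set_mult_def by auto
  have fin_HK: "finite (H <#> K)" unfolding HK using fH fK by simp
  have "H \<times> K = (\<Union>g\<in>H <#> K. ?fibre g)" unfolding HK by auto
  then have "card (H \<times> K) = card (\<Union>g\<in>H <#> K. ?fibre g)" by simp
  also have "\<dots> = (\<Sum>g\<in>H <#> K. card (?fibre g))"
    by (rule card_UN_disjoint) (use fin_HK fH fK in auto)
  also have "\<dots> \<le> (\<Sum>g\<in>H <#> K. card (H \<inter> K))"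
  proof (rule sum_mono)
    fix g assume "g \<in> H <#> K"
    then obtain h0 k0 where h0: "h0 \<in> H" and k0: "k0 \<in> K" and g: "g = h0 \<otimes> k0"
      unfolding set_mult_def by auto
    have h0c: "h0 \<in> carrier G" and k0c: "k0 \<in> carrier G" using h0 k0 Hc Kc by auto
    \<comment> \<open>the fibre over h0 k0 consists of the pairs (h0 d, inv d k0) with d in H \<inter> K\<close>
    let ?u = "\<lambda>(h, k). inv h0 \<otimes> h"
    have inj: "inj_on ?u (?fibre g)"
    proof (rule inj_onI)
      fix x y assume "x \<in> ?fibre g" "y \<in> ?fibre g" "?u x = ?u y"
      moreover obtain h k h' k' where "x = (h, k)" "y = (h', k')" by (cases x, cases y)
      ultimately have mem: "h \<in> carrier G" "k \<in> carrier G" "h' \<in> carrier G" "k' \<in> carrier G"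
        and prod: "h \<otimes> k = h' \<otimes> k'" and "inv h0 \<otimes> h = inv h0 \<otimes> h'"
        using Hc Kc by auto
      then have "h = h'" using h0c by simp
      with prod mem have "k = k'" by simp
      with \<open>h = h'\<close> show "x = y" using \<open>x = (h, k)\<close> \<open>y = (h', k')\<close> by simp
    qed
    have img: "?u ` ?fibre g \<subseteq> H \<inter> K"
    proof
      fix x assume "x \<in> ?u ` ?fibre g"
      then obtain h k where hk: "h \<in> H" "k \<in> K" "h \<otimes> k = g" and x: "x = inv h0 \<otimes> h"
        by auto
      then have hc: "h \<in> carrier G" and kc: "k \<in> carrier G" using Hc Kc by auto
      have eq: "inv h0 \<otimes> h = k0 \<otimes> inv k"
        using hk g hc kc h0c k0c by (metis inv_solve_left inv_solve_right m_assoc inv_closed m_closed)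
      have inH: "inv h0 \<otimes> h \<in> H" using hk h0 H by (simp add: subgroup.m_closed subgroup.m_inv_closed)
      have "k0 \<otimes> inv k \<in> K" using hk k0 K by (simp add: subgroup.m_closed subgroup.m_inv_closed)
      then have inK: "inv h0 \<otimes> h \<in> K" by (simp only: eq)
      from x inH inK show "x \<in> H \<inter> K" by blast
    qed
    then show "card (?fibre g) \<le> card (H \<inter> K)"
      using card_inj_on_le[OF inj img] fH by simp
  qed
  also have "\<dots> = card (H <#> K) * card (H \<inter> K)" by simp
  finally show ?thesis by (simp add: card_cartesian_product)
qed

end

locale finite_group = group +
  assumes finite_carrier: "finite (carrier G)"

context finite_group
begin

lemma finite_subgroup: "subgroup H G \<Longrightarrow> finite H"
  using subgroup.subset finite_carrier finite_subset by blast

lemma card_subgroup_pos: "subgroup H G \<Longrightarrow> 0 < card H"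
  using finite_subgroup subgroup.one_closed card_gt_0_iff by blast

lemma finite_centralizer: "finite (centralizer G S)"
  using centralizer_subset_carrier finite_carrier finite_subset by blast

lemma card_centralizer_pos: "S \<subseteq> carrier G \<Longrightarrow> 0 < card (centralizer G S)"
  using card_subgroup_pos subgroup_centralizer by blast

lemma card_subgroup_dvd:
  assumes H: "subgroup H G" and K: "subgroup K G" and "H \<subseteq> K"
  shows "card H dvd card K"
proof -
  interpret K: group "G\<lparr>carrier := K\<rparr>" by (rule subgroup_imp_group[OF K])
  have "subgroup H (G\<lparr>carrier := K\<rparr>)" by (rule subgroup_incl[OF H K \<open>H \<subseteq> K\<close>])
  from K.lagrange[OF this] have "card (rcosets\<^bsub>G\<lparr>carrier := K\<rparr>\<^esub> H) * card H = card K"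
    unfolding order_def by simp
  then show ?thesis by (metis dvd_triv_right)
qed

lemma finite_cd_measures: "finite {cd_measure G H | H. subgroup H G}"
proof -
  have "{cd_measure G H | H. subgroup H G} = cd_measure G ` {H. H \<subseteq> carrier G \<and> subgroup H G}"
    using subgroup.subset by blast
  then show ?thesis using finite_carrier by simp
qed

lemma cd_measure_le_cd_max: "subgroup H G \<Longrightarrow> cd_measure G H \<le> cd_max G"
  unfolding cd_max_def using finite_cd_measures by (auto intro: Max_ge)

lemma cd_max_eqI:
  assumes bound: "\<And>H. subgroup H G \<Longrightarrow> cd_measure G H \<le> M"
    and H0: "subgroup H0 G" "cd_measure G H0 = M"
  shows "cd_max G = M"
proof -
  have "{cd_measure G H | H. subgroup H G} \<noteq> {}" using H0 by blast
  then have "cd_max G \<le> M" unfolding cd_max_def using finite_cd_measures bound by (auto simp: Max_le_iff)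
  with cd_measure_le_cd_max[OF H0(1)] H0(2) show ?thesis by simp
qed

lemma cd_max_pos: "0 < cd_max G"
proof -
  have "0 < cd_measure G (carrier G)" unfolding cd_measure_def
    using card_subgroup_pos[OF subgroup_self] card_centralizer_pos by simp
  then show ?thesis using cd_measure_le_cd_max[OF subgroup_self] by simp
qed

lemma cd_measure_le_centralizer_centralizer:
  assumes H: "subgroup H G"
  shows "cd_measure G H \<le> cd_measure G (centralizer G (centralizer G H))"
    and "cd_measure G H = cd_measure G (centralizer G (centralizer G H)) \<Longrightarrow>
           centralizer G (centralizer G H) = H"
proof -
  have Hc: "H \<subseteq> carrier G" using H subgroup.subset by blast
  then have sub: "H \<subseteq> centralizer G (centralizer G H)" by (rule subset_centralizer_centralizer)
  have C3: "centralizer G (centralizer G (centralizer G H)) = centralizer G H"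
    using Hc by (rule centralizer_centralizer_centralizer)
  have "card H \<le> card (centralizer G (centralizer G H))"
    using card_mono[OF finite_centralizer sub] .
  then show "cd_measure G H \<le> cd_measure G (centralizer G (centralizer G H))"
    unfolding cd_measure_def C3 by simp
  assume "cd_measure G H = cd_measure G (centralizer G (centralizer G H))"
  then have "card H = card (centralizer G (centralizer G H))"
    unfolding cd_measure_def C3 using card_centralizer_pos[OF Hc] by simp
  then show "centralizer G (centralizer G H) = H"
    using card_subset_eq[OF finite_centralizer sub] by simp
qed

lemma CD_centralizer_centralizer:
  assumes "H \<in> CD G"
  shows "centralizer G (centralizer G H) = H"
proof -
  have H: "subgroup H G" and m: "cd_measure G H = cd_max G" using assms unfolding CD_def by auto
  have "subgroup (centralizer G (centralizer G H)) G"
    by (rule subgroup_centralizer[OF centralizer_subset_carrier])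
  from cd_measure_le_cd_max[OF this] cd_measure_le_centralizer_centralizer[OF H] m
  show ?thesis by simp
qed

lemma centralizer_in_CD:
  assumes "H \<in> CD G"
  shows "centralizer G H \<in> CD G"
proof -
  have H: "subgroup H G" and m: "cd_measure G H = cd_max G" using assms unfolding CD_def by auto
  have "cd_measure G (centralizer G H) = cd_measure G H"
    unfolding cd_measure_def CD_centralizer_centralizer[OF assms] by simp
  with m subgroup_centralizer[OF subgroup.subset[OF H]] show ?thesis unfolding CD_def by simp
qed

lemma CD_Int:
  assumes H: "H \<in> CD G" and K: "K \<in> CD G"
  shows "H \<inter> K \<in> CD G"
proof -
  let ?M = "cd_max G" and ?C = "centralizer G"
  let ?L = "?C (?C (H \<union> K))"
  have Hs: "subgroup H G" and mH: "card H * card (?C H) = ?M"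
    and Ks: "subgroup K G" and mK: "card K * card (?C K) = ?M"
    using H K unfolding CD_def cd_measure_def by auto
  have Hc: "H \<subseteq> carrier G" and Kc: "K \<subseteq> carrier G" using Hs Ks subgroup.subset by auto
  have Ls: "subgroup ?L G" by (rule subgroup_centralizer[OF centralizer_subset_carrier])
  have HKs: "subgroup (H \<inter> K) G" using subgroups_Inter_pair Hs Ks by blast
  have CHs: "subgroup (?C H) G" and CKs: "subgroup (?C K) G" using subgroup_centralizer Hc Kc by auto
  have CL: "?C ?L = ?C H \<inter> ?C K"
    using centralizer_centralizer_centralizer[of "H \<union> K"] Hc Kc unfolding centralizer_def by auto
  have "H <#> K \<subseteq> ?L"
    using set_mult_subset_subgroup[OF Ls] subset_centralizer_centralizer[of "H \<union> K"] Hc Kc by blast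
  then have L: "card (H <#> K) \<le> card ?L" by (rule card_mono[OF finite_centralizer])
  have "?C H <#> ?C K \<subseteq> ?C (H \<inter> K)"
    using set_mult_subset_subgroup[OF subgroup_centralizer] centralizer_antimono Hc
    by (metis inf_le1 inf_le2 le_infI1)
  then have CHK: "card (?C H <#> ?C K) \<le> card (?C (H \<inter> K))" by (rule card_mono[OF finite_centralizer])
  \<comment> \<open>the product formula for H, K and for C(H), C(K) gives m(H) m(K) \<le> m(?L) m(H \<inter> K)\<close>
  have "?M * ?M = (card H * card K) * (card (?C H) * card (?C K))" using mH mK by (simp add: algebra_simps)
  also have "\<dots> \<le> (card (H <#> K) * card (H \<inter> K)) * (card (?C H <#> ?C K) * card (?C H \<inter> ?C K))"
    using card_mult_Int_ge[OF finite_carrier Hs Ks] card_mult_Int_ge[OF finite_carrier CHs CKs]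
    by (rule mult_le_mono)
  also have "\<dots> = (card (H <#> K) * card (?C H \<inter> ?C K)) * (card (H \<inter> K) * card (?C H <#> ?C K))"
    by (simp add: algebra_simps)
  also have "\<dots> \<le> cd_measure G ?L * cd_measure G (H \<inter> K)"
    unfolding cd_measure_def CL using L CHK by (intro mult_le_mono) auto
  also have "\<dots> \<le> ?M * cd_measure G (H \<inter> K)"
    using cd_measure_le_cd_max[OF Ls] by (rule mult_le_mono1)
  finally have "?M \<le> cd_measure G (H \<inter> K)" using cd_max_pos by simp
  with cd_measure_le_cd_max[OF HKs] HKs show ?thesis unfolding CD_def by simp
qed

lemma cd_max_eq_closed:
  assumes bound: "\<And>H. subgroup H G \<Longrightarrow> centralizer G (centralizer G H) = H \<Longrightarrow> cd_measure G H \<le> M"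
    and H0: "subgroup H0 G" "cd_measure G H0 = M"
  shows "cd_max G = M"
proof (rule cd_max_eqI[OF _ H0])
  fix H assume H: "subgroup H G"
  let ?H' = "centralizer G (centralizer G H)"
  have "subgroup ?H' G" by (rule subgroup_centralizer[OF centralizer_subset_carrier])
  moreover have "centralizer G (centralizer G ?H') = ?H'"
    by (rule centralizer_centralizer_centralizer[OF centralizer_subset_carrier])
  ultimately have "cd_measure G ?H' \<le> M" by (rule bound)
  with cd_measure_le_centralizer_centralizer(1)[OF H] show "cd_measure G H \<le> M" by simp
qed

lemma mem_CD_iff:
  "H \<in> CD G \<longleftrightarrow> subgroup H G \<and> centralizer G (centralizer G H) = H \<and> cd_measure G H = cd_max G"
  using CD_centralizer_centralizer unfolding CD_def by blast

lemma CD_eqI: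
  assumes bound: "\<And>H. subgroup H G \<Longrightarrow> centralizer G (centralizer G H) = H \<Longrightarrow> cd_measure G H \<le> M"
    and extremal: "\<And>H. subgroup H G \<Longrightarrow> centralizer G (centralizer G H) = H \<Longrightarrow>
                    cd_measure G H = M \<Longrightarrow> H \<in> S"
    and S: "\<And>H. H \<in> S \<Longrightarrow> subgroup H G \<and> cd_measure G H = M" and "S \<noteq> {}"
  shows "CD G = S"
proof -
  obtain H0 where "H0 \<in> S" using \<open>S \<noteq> {}\<close> by blast
  with S have "cd_max G = M" by (intro cd_max_eq_closed[OF bound]) auto
  show ?thesis
  proof (rule Set.set_eqI)
    fix H
    show "H \<in> CD G \<longleftrightarrow> H \<in> S"
      using S extremal CD_centralizer_centralizer \<open>cd_max G = M\<close> unfolding CD_def by blast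
  qed
qed

lemma in_CD_if_cd_max_le: "subgroup H G \<Longrightarrow> cd_max G \<le> cd_measure G H \<Longrightarrow> H \<in> CD G"
  using cd_measure_le_cd_max unfolding CD_def by (simp add: le_antisym)

lemma cd_measure_grp_center: "cd_measure G (grp_center G) = card (carrier G) * card (grp_center G)"
  unfolding cd_measure_def centralizer_grp_center by simp

lemma cd_measure_carrier: "cd_measure G (carrier G) = card (carrier G) * card (grp_center G)"
  unfolding cd_measure_def centralizer_carrier ..

lemma CD_comm_group:
  assumes "comm_group G"
  shows "CD G = {carrier G}"
proof -
  interpret comm_group G by (rule assms)
  have C: "centralizer G H = carrier G" if "H \<subseteq> carrier G" for H
    using that m_comm unfolding centralizer_def by blast
  let ?n = "card (carrier G)"
  show ?thesis
  proof (rule CD_eqI[where M = "?n * ?n"])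
    fix H assume H: "subgroup H G"
    then have Hc: "H \<subseteq> carrier G" by (rule subgroup.subset)
    then show "cd_measure G H \<le> ?n * ?n"
      unfolding cd_measure_def C[OF Hc] using card_mono[OF finite_carrier Hc] by simp
    assume "cd_measure G H = ?n * ?n"
    then have "card H = ?n"
      unfolding cd_measure_def C[OF Hc] using card_subgroup_pos[OF subgroup_self] by simp
    then show "H \<in> {carrier G}" using card_subset_eq[OF finite_carrier Hc] by simp
  qed (auto simp: cd_measure_def C subgroup_self)
qed

end

section \<open>Subgroup indices above the centre\<close>

locale index_gap_group = finite_group +
  fixes p :: nat
  assumes two_le_p: "2 \<le> p"
    and index_gap: "\<lbrakk>subgroup K G; subgroup L G; grp_center G \<subseteq> K; K \<subset> L\<rbrakk> \<Longrightarrow> p * card K \<le> card L"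

lemma (in finite_group) index_gap_group_if_center_index_prime_power:
  assumes p: "Factorial_Ring.prime p" and n: "card (carrier G) = p^i * card (grp_center G)"
  shows "index_gap_group G p"
proof (intro index_gap_group.intro[OF finite_group_axioms] index_gap_group_axioms.intro)
  show "2 \<le> p" using p by (rule prime_ge_2_nat)
next
  fix K L assume K: "subgroup K G" and L: "subgroup L G" and ZK: "grp_center G \<subseteq> K" and KL: "K \<subset> L"
  obtain t where t: "card L = card K * t"
    using card_subgroup_dvd[OF K L] KL by (auto elim: dvdE)
  obtain s where s: "card (carrier G) = card L * s"
    using card_subgroup_dvd[OF L subgroup_self subgroup.subset[OF L]] by (auto elim: dvdE)
  obtain r where r: "card K = card (grp_center G) * r"
    using card_subgroup_dvd[OF subgroup_grp_center K ZK] by (auto elim: dvdE)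
  have "card (carrier G) = (r * t * s) * card (grp_center G)"
    using s t r by (simp add: algebra_simps)
  then have "p^i = r * t * s"
    using n card_subgroup_pos[OF subgroup_grp_center] by simp
  then have "t dvd p^i" by (metis dvd_triv_left dvd_mult_left mult.commute)
  then obtain j where j: "t = p^j" using divides_primepow_nat[OF p] by blast
  have "card K < card L" using psubset_card_mono[OF finite_subgroup[OF L] KL] .
  with t j have "j \<noteq> 0" by (cases j) auto
  then have "p \<le> t" using j prime_gt_0_nat[OF p] by (simp add: Suc_leI self_le_power)
  then show "p * card K \<le> card L" using t by (simp add: mult.commute)
qed

lemma (in finite_group) index_gap_group_if_smallest_prime_divisor:
  assumes sp: "smallest_prime_divisor p (card (carrier G))"
  shows "index_gap_group G p"
proof (intro index_gap_group.intro[OF finite_group_axioms] index_gap_group_axioms.intro)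
  show "2 \<le> p" using sp prime_ge_2_nat unfolding smallest_prime_divisor_def by blast
next
  fix K L assume K: "subgroup K G" and L: "subgroup L G" and "grp_center G \<subseteq> K" and KL: "K \<subset> L"
  obtain t where t: "card L = card K * t"
    using card_subgroup_dvd[OF K L] KL by (auto elim: dvdE)
  have "card L dvd card (carrier G)"
    using card_subgroup_dvd[OF L subgroup_self subgroup.subset[OF L]] .
  then have t_dvd: "t dvd card (carrier G)" using t by (metis dvd_mult_right)
  have "card K < card L" using psubset_card_mono[OF finite_subgroup[OF L] KL] .
  with t have "t \<noteq> 1" and "0 < t" by (auto intro: gr0I)
  then obtain q where q: "Factorial_Ring.prime q" "q dvd t" using prime_factor_nat by blast
  with sp t_dvd have "p \<le> q" unfolding smallest_prime_divisor_def using dvd_trans by blast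
  also have "q \<le> t" using q \<open>0 < t\<close> by (simp add: dvd_imp_le)
  finally show "p * card K \<le> card L" using t by (simp add: mult.commute)
qed

context index_gap_group
begin

lemma p_pos: "0 < p"
  using two_le_p by simp

lemma four_le_p_sq: "4 \<le> p^2"
proof -
  have "2 * 2 \<le> p * p" using two_le_p two_le_p by (rule mult_le_mono)
  then show ?thesis by (simp add: power2_eq_square)
qed

lemma index_Int_centralizer_nonabelian:
  assumes W: "subgroup W G" and ZW: "grp_center G \<subseteq> W" and nonabelian: "\<not> W \<subseteq> centralizer G W"
  shows "p^2 * card (W \<inter> centralizer G W) \<le> card W"
proof -
  let ?D = "W \<inter> centralizer G W"
  have Wc: "W \<subseteq> carrier G" using W subgroup.subset by blast
  obtain k where k: "k \<in> W" "k \<notin> centralizer G W" using nonabelian by blast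
  then have kc: "k \<in> carrier G" using Wc by blast
  \<comment> \<open>the centralizer of k in W lies strictly between Z(W) and W\<close>
  let ?M = "W \<inter> centralizer G {k}"
  have M: "subgroup ?M G" using subgroups_Inter_pair W subgroup_centralizer kc by blast
  have DM: "?D \<subset> ?M"
    using k kc unfolding centralizer_def by auto
  have MW: "?M \<subset> W" using Int_centralizer_singleton_psubset k kc by blast
  have ZD: "grp_center G \<subseteq> ?D" using ZW grp_center_subset_centralizer[OF Wc] by blast
  have "p * (p * card ?D) \<le> p * card ?M"
    using index_gap[OF subgroup_Int_centralizer[OF W] M ZD DM] by simp
  also have "\<dots> \<le> card W"
    using index_gap[OF M W _ MW] ZD DM by blast
  finally show ?thesis by (simp add: power2_eq_square mult.assoc)
qed

lemma abelian_if_index_p_over_central: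
  assumes B: "subgroup B G" and YB: "Y \<subseteq> B" and YC: "Y \<subseteq> centralizer G B"
    and ZY: "grp_center G \<subseteq> Y" and cB: "card B = p * card Y"
  shows "B \<subseteq> centralizer G B"
proof (rule ccontr)
  assume "\<not> B \<subseteq> centralizer G B"
  from index_Int_centralizer_nonabelian[OF B _ this] ZY YB
  have le: "p^2 * card (B \<inter> centralizer G B) \<le> card B" by blast
  have "card Y \<le> card (B \<inter> centralizer G B)"
    using card_mono[OF finite_subgroup[OF subgroup_Int_centralizer[OF B]]] YB YC by blast
  then have "p^2 * card Y \<le> p * card Y"
    using le cB by (metis le_trans mult_le_mono2)
  moreover have "0 < card Y" using cB card_subgroup_pos[OF B] by simp
  ultimately have "p^2 \<le> p" by simp
  then show False using two_le_p by (simp add: power2_eq_square)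
qed

lemma centralizer_Int_subset_grp_center_index_p:
  assumes K: "subgroup K G" and ZK: "grp_center G \<subseteq> K" and n: "card (carrier G) = p * card K"
    and S: "S \<subseteq> carrier G" "\<not> S \<subseteq> K"
  shows "centralizer G K \<inter> centralizer G S \<subseteq> grp_center G"
proof
  fix x assume x: "x \<in> centralizer G K \<inter> centralizer G S"
  then have xc: "x \<in> carrier G" using centralizer_subset_carrier by blast
  have "K \<union> S \<subseteq> centralizer G {x}"
    using x subgroup.subset[OF K] S(1) unfolding centralizer_def by auto
  with S(2) have "K \<subset> centralizer G {x}" by blast
  then have "p * card K \<le> card (centralizer G {x})"
    using index_gap[OF K subgroup_centralizer ZK] xc by blast
  then have "card (carrier G) \<le> card (centralizer G {x})" using n by simp
  then have "centralizer G {x} = carrier G"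
    using card_seteq[OF finite_carrier centralizer_subset_carrier] by blast
  with xc show "x \<in> grp_center G" by (rule grp_center_if_centralizer_singleton)
qed

lemma Int_centralizer_singleton_intermediate:
  assumes W: "subgroup W G" and Y: "Y = W \<inter> centralizer G W" and cW: "card W = p^2 * card Y"
    and ZY: "grp_center G \<subseteq> Y" and x: "x \<in> W - Y"
  shows "subgroup (W \<inter> centralizer G {x}) G \<and> Y \<subseteq> W \<inter> centralizer G {x} \<and>
    card (W \<inter> centralizer G {x}) = p * card Y \<and> x \<in> W \<inter> centralizer G {x}"
proof -
  let ?B = "W \<inter> centralizer G {x}"
  have xc: "x \<in> carrier G" using x subgroup.subset[OF W] by blast
  have Ys: "subgroup Y G" using Y subgroup_Int_centralizer[OF W] by simp
  have Bs: "subgroup ?B G" using subgroups_Inter_pair W subgroup_centralizer xc by blast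
  have xB: "x \<in> ?B" using x xc unfolding centralizer_def by auto
  have YB: "Y \<subseteq> ?B" using Y x unfolding centralizer_def by auto
  have BW: "?B \<subset> W" using Int_centralizer_singleton_psubset x xc Y by blast
  have "p * card Y \<le> card ?B" using index_gap[OF Ys Bs ZY] YB xB x by blast
  moreover have "p * card ?B \<le> card W"
    using index_gap[OF Bs W _ BW] ZY YB by blast
  then have "p * card ?B \<le> p * (p * card Y)" using cW by (simp add: power2_eq_square mult.assoc)
  then have "card ?B \<le> p * card Y" using p_pos by simp
  ultimately show ?thesis using Bs YB xB by simp
qed

lemma intermediate_subgroups_Int:
  assumes Y: "subgroup Y G" and ZY: "grp_center G \<subseteq> Y"
    and B: "subgroup B G" "Y \<subseteq> B" "card B = p * card Y"
    and B': "subgroup B' G" "Y \<subseteq> B'" "card B' = p * card Y" and "B \<noteq> B'"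
  shows "B \<inter> B' = Y"
proof (rule ccontr)
  assume "B \<inter> B' \<noteq> Y"
  with B(2) B'(2) have "Y \<subset> B \<inter> B'" by blast
  then have le: "p * card Y \<le> card (B \<inter> B')"
    using index_gap[OF Y subgroups_Inter_pair[OF B(1) B'(1)] ZY] by blast
  have "B \<inter> B' = B"
    using card_subset_eq[OF finite_subgroup[OF B(1)], of "B \<inter> B'"] le B(3)
      card_mono[OF finite_subgroup[OF B(1)], of "B \<inter> B'"] by auto
  moreover have "B \<inter> B' = B'"
    using card_subset_eq[OF finite_subgroup[OF B'(1)], of "B \<inter> B'"] le B'(3)
      card_mono[OF finite_subgroup[OF B'(1)], of "B \<inter> B'"] by auto
  ultimately show False using \<open>B \<noteq> B'\<close> by simp
qed

lemma card_intermediate_subgroups: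
  assumes W: "subgroup W G" and Y: "Y = W \<inter> centralizer G W" and cW: "card W = p^2 * card Y"
    and ZY: "grp_center G \<subseteq> Y"
  defines "F \<equiv> {B. subgroup B G \<and> Y \<subseteq> B \<and> B \<subseteq> W \<and> card B = p * card Y}"
  shows "finite F" and "card F = p + 1"
proof -
  have Ys: "subgroup Y G" using Y subgroup_Int_centralizer[OF W] by simp
  have YW: "Y \<subseteq> W" using Y by blast
  have "F \<subseteq> Pow (carrier G)" unfolding F_def using subgroup.subset by blast
  then show fF: "finite F" using finite_carrier finite_subset by blast
  have "W - Y \<subseteq> (\<Union>B\<in>F. B - Y)"
  proof
    fix x assume x: "x \<in> W - Y"
    with Int_centralizer_singleton_intermediate[OF W Y cW ZY x]
    show "x \<in> (\<Union>B\<in>F. B - Y)" unfolding F_def by blast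
  qed
  then have "W - Y = (\<Union>B\<in>F. B - Y)" unfolding F_def by blast
  then have "card (W - Y) = card (\<Union>B\<in>F. B - Y)" by simp
  also have "\<dots> = (\<Sum>B\<in>F. card (B - Y))"
  proof (rule card_UN_disjoint[OF fF])
    show "\<forall>B\<in>F. finite (B - Y)" unfolding F_def using finite_subgroup by blast
    show "\<forall>B\<in>F. \<forall>B'\<in>F. B \<noteq> B' \<longrightarrow> (B - Y) \<inter> (B' - Y) = {}"
      using intermediate_subgroups_Int[OF Ys ZY] unfolding F_def by blast
  qed
  also have "\<dots> = (\<Sum>B\<in>F. p * card Y - card Y)"
  proof (rule sum.cong[OF refl])
    fix B assume "B \<in> F"
    then have "Y \<subseteq> B" "card B = p * card Y" unfolding F_def by auto
    then show "card (B - Y) = p * card Y - card Y"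
      using card_Diff_subset[OF finite_subgroup[OF Ys]] by simp
  qed
  finally have "p^2 * card Y - card Y = card F * (p * card Y - card Y)"
    using card_Diff_subset[OF finite_subgroup[OF Ys] YW] cW by simp
  \<comment> \<open>that is, p^2 - 1 = card F * (p - 1)\<close>
  moreover have "p^2 * card Y - card Y = (p + 1) * ((p - 1) * card Y)"
    using two_le_p by (cases p) (auto simp: algebra_simps power2_eq_square)
  moreover have "p * card Y - card Y = (p - 1) * card Y" by (simp add: diff_mult_distrib)
  moreover have "0 < (p - 1) * card Y" using two_le_p card_subgroup_pos[OF Ys] by simp
  ultimately show "card F = p + 1" by (metis mult_right_cancel neq0_conv)
qed

lemma CD_quasi_antichain_intermediate:
  assumes W: "subgroup W G" and Y: "Y = W \<inter> centralizer G W" and cW: "card W = p^2 * card Y"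
    and ZY: "grp_center G \<subseteq> Y"
    and CD: "CD G = {Y, W} \<union> {B. subgroup B G \<and> Y \<subseteq> B \<and> B \<subseteq> W \<and> card B = p * card Y}"
    and H: "H \<in> CD G" "H \<noteq> Y" "H \<noteq> W"
  shows "\<exists>As :: nat \<Rightarrow> 'a set. CD G = {Y, H, W} \<union> As ` {1..p} \<and> quasi_antichain (CD G) (p + 1) \<and>
           (\<forall>i\<in>{1..p}. comm_group (G\<lparr>carrier := As i\<rparr>))"
proof -
  define F where "F = {B. subgroup B G \<and> Y \<subseteq> B \<and> B \<subseteq> W \<and> card B = p * card Y}"
  have fF: "finite F" and cF: "card F = p + 1"
    using card_intermediate_subgroups[OF W Y cW ZY] unfolding F_def by blast+
  have HF: "H \<in> F" using H CD unfolding F_def by blast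
  have "card (F - {H}) = p" using cF fF HF by simp
  then obtain As where "bij_betw As {1..p} (F - {H})"
    using ex_bij_betw_nat_finite_1[of "F - {H}"] fF by auto
  then have F: "F = insert H (As ` {1..p})" using HF unfolding bij_betw_def by blast
  have y: "0 < card Y" using card_subgroup_pos subgroup_Int_centralizer[OF W] Y by simp
  have "quasi_antichain ({Y, W} \<union> F) (p + 1)"
  proof (rule quasi_antichainI)
    show "Y \<noteq> W" using cW y two_le_p by (auto simp: power2_eq_square)
    show "Y \<notin> F" using y two_le_p unfolding F_def by auto
    show "W \<notin> F" using cW y two_le_p unfolding F_def by (auto simp: power2_eq_square)
    show "Y \<subseteq> W" using Y by blast
    show "\<forall>B\<in>F. Y \<subseteq> B \<and> B \<subseteq> W" unfolding F_def by blast
    show "\<forall>B\<in>F. \<forall>B'\<in>F. B \<subseteq> B' \<longrightarrow> B = B'"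
    proof (intro ballI impI)
      fix B B' assume "B \<in> F" "B' \<in> F" "B \<subseteq> B'"
      then show "B = B'" unfolding F_def using card_subset_eq[OF finite_subgroup] by auto
    qed
  qed fact+
  moreover have "comm_group (G\<lparr>carrier := B\<rparr>)" if "B \<in> F" for B
  proof -
    have B: "subgroup B G" "Y \<subseteq> B" "B \<subseteq> W" "card B = p * card Y" using that unfolding F_def by auto
    then have "Y \<subseteq> centralizer G B" using Y centralizer_antimono by blast
    with B have "B \<subseteq> centralizer G B" using abelian_if_index_p_over_central ZY by blast
    with B(1) show ?thesis by (rule comm_group_if_subset_centralizer)
  qed
  ultimately show ?thesis using CD F unfolding F_def[symmetric] by (intro exI[of _ As]) auto
qed

section \<open>Centralizer-closed subgroups\<close>

lemma closed_psubset_centralizer: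
  assumes H: "subgroup H G" and cl: "centralizer G (centralizer G H) = H"
    and HC: "H \<subset> centralizer G H" and CG: "centralizer G H \<noteq> carrier G"
  shows "p * card (centralizer G H) \<le> card (carrier G)" and "p^2 * card H \<le> card (centralizer G H)"
proof -
  let ?K = "centralizer G H"
  have Hc: "H \<subseteq> carrier G" using H subgroup.subset by blast
  have K: "subgroup ?K G" using subgroup_centralizer[OF Hc] .
  have ZK: "grp_center G \<subseteq> ?K" using grp_center_subset_centralizer[OF Hc] .
  show "p * card ?K \<le> card (carrier G)"
    using index_gap[OF K subgroup_self ZK] CG centralizer_subset_carrier by blast
  have "?K \<inter> centralizer G ?K = H" and "\<not> ?K \<subseteq> centralizer G ?K" using cl HC by auto
  with index_Int_centralizer_nonabelian[OF K ZK] show "p^2 * card H \<le> card ?K" by simp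
qed

lemma closed_below_measure:
  assumes H: "subgroup H G" and cl: "centralizer G (centralizer G H) = H"
    and HC: "H \<subset> centralizer G H" and HZ: "H \<noteq> grp_center G"
  shows "p^4 * cd_measure G H \<le> (card (carrier G))^2"
    and "p^4 * cd_measure G H = (card (carrier G))^2 \<Longrightarrow>
           p * card (centralizer G H) = card (carrier G) \<and> p^2 * card H = card (centralizer G H)"
proof -
  have "centralizer G H \<noteq> carrier G"
  proof
    assume "centralizer G H = carrier G"
    then have "H = grp_center G" using cl centralizer_carrier by simp
    with HZ show False ..
  qed
  note bounds = closed_psubset_centralizer[OF H cl HC this]
  show "p^4 * cd_measure G H \<le> (card (carrier G))^2"
    unfolding cd_measure_def by (rule nested_measure_bound(1)[OF bounds(2,1)])
  show "p^4 * cd_measure G H = (card (carrier G))^2 \<Longrightarrow>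
          p * card (centralizer G H) = card (carrier G) \<and> p^2 * card H = card (centralizer G H)"
    unfolding cd_measure_def
    using nested_measure_bound(2)[OF bounds(2,1)] card_centralizer_pos[OF subgroup.subset[OF H]] p_pos
    by blast
qed

lemma closed_above_measure:
  assumes H: "subgroup H G" and cl: "centralizer G (centralizer G H) = H"
    and CH: "centralizer G H \<subset> H" and HG: "H \<noteq> carrier G"
  shows "p^4 * cd_measure G H \<le> (card (carrier G))^2"
    and "p^4 * cd_measure G H = (card (carrier G))^2 \<Longrightarrow>
           p * card H = card (carrier G) \<and> p^2 * card (centralizer G H) = card H"
proof -
  let ?K = "centralizer G H"
  have Hc: "H \<subseteq> carrier G" using H subgroup.subset by blast
  have K: "subgroup ?K G" using subgroup_centralizer[OF Hc] .
  have clK: "centralizer G (centralizer G ?K) = ?K"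
    using centralizer_centralizer_centralizer[OF Hc] .
  have KC: "?K \<subset> centralizer G ?K" using CH cl by simp
  have KZ: "?K \<noteq> grp_center G"
  proof
    assume "?K = grp_center G"
    then have "H = carrier G" using cl centralizer_grp_center by simp
    with HG show False ..
  qed
  have m: "cd_measure G ?K = cd_measure G H" unfolding cd_measure_def cl by simp
  show "p^4 * cd_measure G H \<le> (card (carrier G))^2"
    using closed_below_measure(1)[OF K clK KC KZ] unfolding m .
  show "p^4 * cd_measure G H = (card (carrier G))^2 \<Longrightarrow>
          p * card H = card (carrier G) \<and> p^2 * card ?K = card H"
    using closed_below_measure(2)[OF K clK KC KZ] unfolding m cl .
qed

lemma closed_incomparable_measure:
  assumes H: "subgroup H G" and cl: "centralizer G (centralizer G H) = H"
    and HC: "\<not> H \<subseteq> centralizer G H" and CH: "\<not> centralizer G H \<subseteq> H"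
  shows "p^4 * cd_measure G H \<le> (card (carrier G))^2"
    and "p^4 * cd_measure G H = (card (carrier G))^2 \<Longrightarrow>
           p^2 * card H = card (carrier G) \<and> p^2 * card (centralizer G H) = card (carrier G) \<and>
           H \<inter> centralizer G H \<subseteq> grp_center G \<and> p^4 * card (H \<inter> centralizer G H) = card (carrier G)"
proof -
  let ?K = "centralizer G H" and ?n = "card (carrier G)"
  let ?D = "H \<inter> ?K"
  have Hc: "H \<subseteq> carrier G" using H subgroup.subset by blast
  have K: "subgroup ?K G" using subgroup_centralizer[OF Hc] .
  have Kc: "?K \<subseteq> carrier G" by (rule centralizer_subset_carrier)
  have ZK: "grp_center G \<subseteq> ?K" using grp_center_subset_centralizer[OF Hc] .
  have ZH: "grp_center G \<subseteq> H" using grp_center_subset_centralizer[OF Kc] cl by simp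
  have dH: "p^2 * card ?D \<le> card H" using index_Int_centralizer_nonabelian[OF H ZH HC] .
  have "?K \<inter> centralizer G ?K = ?D" "\<not> ?K \<subseteq> centralizer G ?K" using cl CH by auto
  with index_Int_centralizer_nonabelian[OF K ZK] have dK: "p^2 * card ?D \<le> card ?K" by simp
  have prod: "card H * card ?K \<le> card (H <#> ?K) * card ?D"
    by (rule card_mult_Int_ge[OF finite_carrier H K])
  have HK: "H <#> ?K \<subseteq> carrier G" by (rule set_mult_subset_subgroup[OF subgroup_self Hc Kc])
  have "card (H <#> ?K) \<le> ?n" using card_mono[OF finite_carrier HK] .
  with prod have hk: "card H * card ?K \<le> ?n * card ?D" by (meson le_trans mult_le_mono1)
  have D: "0 < card ?D" using card_subgroup_pos[OF subgroup_Int_centralizer[OF H]] .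
  show "p^4 * cd_measure G H \<le> ?n^2"
    unfolding cd_measure_def by (rule meet_measure_bound(1)[OF dH dK hk D])
  assume "p^4 * cd_measure G H = ?n^2"
  from meet_measure_bound(2)[OF dH dK hk D this[unfolded cd_measure_def] p_pos]
  have sizes: "p^4 * card ?D = ?n" "card H = p^2 * card ?D" "card ?K = p^2 * card ?D"
    and full: "card H * card ?K = ?n * card ?D" by auto
  \<comment> \<open>equality in the product formula forces H C_G(H) = G, so D centralizes G\<close>
  have "?n \<le> card (H <#> ?K)" using prod full D by simp
  then have "H <#> ?K = carrier G" using card_seteq[OF finite_carrier HK] by simp
  then have "?K \<inter> centralizer G ?K \<subseteq> grp_center G"
    by (rule centralizer_Int_subset_grp_center[OF Hc Kc])
  then have "?D \<subseteq> grp_center G" using cl by blast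
  moreover have "p^2 * (p^2 * x) = p^4 * x" for x :: nat by (simp add: power2_eq_square power4_eq_xxxx)
  ultimately show "p^2 * card H = ?n \<and> p^2 * card ?K = ?n \<and> ?D \<subseteq> grp_center G \<and> p^4 * card ?D = ?n"
    using sizes by metis
qed

lemma closed_measure_le:
  assumes H: "subgroup H G" and cl: "centralizer G (centralizer G H) = H"
    and "centralizer G H \<noteq> H" "H \<noteq> grp_center G" "H \<noteq> carrier G"
  shows "p^4 * cd_measure G H \<le> (card (carrier G))^2"
proof -
  consider "H \<subset> centralizer G H" | "centralizer G H \<subset> H"
    | "\<not> H \<subseteq> centralizer G H" "\<not> centralizer G H \<subseteq> H"
    using assms(3) by blast
  then show ?thesis
    using closed_below_measure(1)[OF H cl] closed_above_measure(1)[OF H cl]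
      closed_incomparable_measure(1)[OF H cl] assms(4,5)
    by cases blast+
qed

lemma index_p_center_p3_centralizer:
  assumes H: "subgroup H G" and cl: "centralizer G (centralizer G H) = H" and "H \<subset> centralizer G H"
    and cK: "p * card (centralizer G H) = card (carrier G)" and cH: "p^2 * card H = card (centralizer G H)"
  shows "subgroup (centralizer G H) G \<and> card (carrier G) = p * card (centralizer G H) \<and>
           card (carrier G) = p^3 * card (sub_center G (centralizer G H)) \<and>
           sub_center G (centralizer G H) = H"
proof -
  have "sub_center G (centralizer G H) = H"
    using sub_center_eq[OF centralizer_subset_carrier] cl assms(3) by auto
  moreover have "p^3 * card H = p * (p^2 * card H)" by (simp add: power2_eq_square power3_eq_cube)
  ultimately show ?thesis
    using subgroup_centralizer[OF subgroup.subset[OF H]] cK cH by simp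
qed

lemma index_p_center_p3_self:
  assumes H: "subgroup H G" and "centralizer G H \<subset> H"
    and cH: "p * card H = card (carrier G)" and cK: "p^2 * card (centralizer G H) = card H"
  shows "card (carrier G) = p * card H \<and> card (carrier G) = p^3 * card (sub_center G H) \<and>
           sub_center G H = centralizer G H"
proof -
  have "sub_center G H = centralizer G H"
    using sub_center_eq[OF subgroup.subset[OF H]] assms(2) by auto
  moreover have "p^3 * card (centralizer G H) = p * (p^2 * card (centralizer G H))"
    by (simp add: power2_eq_square power3_eq_cube)
  ultimately show ?thesis using cH cK by simp
qed

end

context index_gap_group
begin

lemma self_centralizing_measure_center_index_p2:
  assumes nz: "card (carrier G) = p^2 * card (grp_center G)"
    and H: "subgroup H G" and sc: "centralizer G H = H"
  shows "cd_measure G H < card (carrier G) * card (grp_center G) \<or>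
    (cd_measure G H = card (carrier G) * card (grp_center G) \<and> p * card H = card (carrier G))"
proof -
  let ?n = "card (carrier G)" and ?z = "card (grp_center G)"
  have nn: "?n * ?n = p^2 * (?n * ?z)" using nz by (simp add: algebra_simps)
  have m: "p^2 * cd_measure G H = (p * card H) * (p * card H)"
    unfolding cd_measure_def sc by (simp add: power2_eq_square algebra_simps)
  have "H \<noteq> carrier G"
  proof
    assume "H = carrier G"
    with sc centralizer_carrier nz card_subgroup_pos[OF subgroup_grp_center] have "p^2 = 1" by simp
    with four_le_p_sq show False by simp
  qed
  moreover have "grp_center G \<subseteq> H"
    using grp_center_subset_centralizer[OF subgroup.subset[OF H]] sc by simp
  ultimately have "p * card H \<le> ?n"
    using index_gap[OF H subgroup_self] subgroup.subset[OF H] by blast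
  show ?thesis
  proof (cases "p * card H = ?n")
    case True
    then have "p^2 * cd_measure G H = p^2 * (?n * ?z)" using m nn by simp
    with True p_pos show ?thesis by simp
  next
    case False
    with \<open>p * card H \<le> ?n\<close> have "(p * card H) * (p * card H) < ?n * ?n"
      by (intro mult_strict_mono) auto
    then have "p^2 * cd_measure G H < p^2 * (?n * ?z)" using m nn by simp
    then show ?thesis using p_pos by simp
  qed
qed

lemma closed_measure_center_index_p2:
  assumes nz: "card (carrier G) = p^2 * card (grp_center G)"
    and H: "subgroup H G" and cl: "centralizer G (centralizer G H) = H"
  shows "cd_measure G H < card (carrier G) * card (grp_center G) \<or>
    (cd_measure G H = card (carrier G) * card (grp_center G) \<and>
     (H = grp_center G \<or> H = carrier G \<or> (centralizer G H = H \<and> p * card H = card (carrier G))))"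
proof -
  let ?n = "card (carrier G)" and ?z = "card (grp_center G)"
  consider (sc) "centralizer G H = H" | "H = grp_center G" | "H = carrier G"
    | (other) "centralizer G H \<noteq> H" "H \<noteq> grp_center G" "H \<noteq> carrier G" by blast
  then show ?thesis
  proof cases
    case sc
    with self_centralizing_measure_center_index_p2[OF nz H] show ?thesis by blast
  next
    case other
    have "p^2 * (p^2 * cd_measure G H) \<le> p^2 * (?n * ?z)"
      using closed_measure_le[OF H cl other] nz by (simp add: power2_eq_square power4_eq_xxxx algebra_simps)
    then have "p^2 * cd_measure G H \<le> ?n * ?z" by (meson nat_mult_le_cancel1 p_pos zero_less_power)
    moreover have "4 * cd_measure G H \<le> p^2 * cd_measure G H"
      using four_le_p_sq by (rule mult_le_mono1)
    moreover have "0 < ?n * ?z"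
      using card_subgroup_pos[OF subgroup_grp_center] card_subgroup_pos[OF subgroup_self] by simp
    ultimately show ?thesis by linarith
  qed (simp_all add: cd_measure_grp_center cd_measure_carrier)
qed

lemma cd_max_center_index_p2:
  assumes nz: "card (carrier G) = p^2 * card (grp_center G)"
  shows "cd_max G = card (carrier G) * card (grp_center G)"
  by (rule cd_max_eq_closed[OF _ subgroup_grp_center cd_measure_grp_center])
    (use closed_measure_center_index_p2[OF nz] in fastforce)

lemma self_centralizing_index_p_over_center:
  assumes nz: "card (carrier G) = p^2 * card (grp_center G)"
    and B: "subgroup B G" and ZB: "grp_center G \<subseteq> B" and cB: "card B = p * card (grp_center G)"
  shows "centralizer G B = B"
proof -
  have BC: "B \<subseteq> centralizer G B"
    using abelian_if_index_p_over_central[OF B ZB _ subset_refl cB]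
      grp_center_subset_centralizer[OF subgroup.subset[OF B]] by blast
  have "card B * card (centralizer G B) \<le> card B * card B"
    using cd_measure_le_cd_max[OF B] cd_max_center_index_p2[OF nz] nz cB
    unfolding cd_measure_def by (simp add: power2_eq_square algebra_simps)
  then have "card (centralizer G B) \<le> card B" using card_subgroup_pos[OF B] by simp
  with BC show ?thesis using card_seteq[OF finite_centralizer] by blast
qed

lemma CD_center_index_p2_eq:
  assumes nz: "card (carrier G) = p^2 * card (grp_center G)"
  shows "CD G = {grp_center G, carrier G} \<union>
    {B. subgroup B G \<and> grp_center G \<subseteq> B \<and> B \<subseteq> carrier G \<and> card B = p * card (grp_center G)}"
    (is "CD G = {grp_center G, carrier G} \<union> ?F")
proof (rule CD_eqI[where M = "card (carrier G) * card (grp_center G)"])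
  fix H assume H: "subgroup H G" and cl: "centralizer G (centralizer G H) = H"
  note cases = closed_measure_center_index_p2[OF nz H cl]
  then show "cd_measure G H \<le> card (carrier G) * card (grp_center G)" by auto
  assume "cd_measure G H = card (carrier G) * card (grp_center G)"
  with cases have "H = grp_center G \<or> H = carrier G \<or>
      (centralizer G H = H \<and> p * card H = card (carrier G))"
    by simp
  moreover have "grp_center G \<subseteq> H" "H \<subseteq> carrier G"
    using grp_center_subset_centralizer[of "centralizer G H"] centralizer_subset_carrier cl
      subgroup.subset[OF H] by auto
  ultimately show "H \<in> {grp_center G, carrier G} \<union> ?F"
    using H nz p_pos by (auto simp: power2_eq_square)
next
  fix H assume "H \<in> {grp_center G, carrier G} \<union> ?F"
  moreover have "cd_measure G B = card (carrier G) * card (grp_center G)" if "B \<in> ?F" for B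
    using that self_centralizing_index_p_over_center[OF nz] nz unfolding cd_measure_def
    by (simp add: power2_eq_square algebra_simps)
  ultimately show "subgroup H G \<and> cd_measure G H = card (carrier G) * card (grp_center G)"
    using subgroup_grp_center subgroup_self cd_measure_grp_center cd_measure_carrier by blast
qed blast

end

locale maximal_self_centralizing = index_gap_group +
  fixes A :: "'a set"
  assumes A_subgroup: "subgroup A G" and A_self_centralizing: "centralizer G A = A"
    and A_maximal: "\<lbrakk>subgroup B G; centralizer G B = B\<rbrakk> \<Longrightarrow> card B \<le> card A"
begin

lemma cd_measure_A: "cd_measure G A = card A * card A"
  unfolding cd_measure_def A_self_centralizing ..

lemma card_A_pos: "0 < card A"
  using card_subgroup_pos[OF A_subgroup] .

lemma grp_center_subset_A: "grp_center G \<subseteq> A"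
  using grp_center_subset_centralizer[OF subgroup.subset[OF A_subgroup]] A_self_centralizing by simp

lemma self_centralizing_measure:
  assumes H: "subgroup H G" and sc: "centralizer G H = H"
  shows "cd_measure G H \<le> card A * card A"
    and "cd_measure G H = card A * card A \<Longrightarrow> card H = card A"
proof -
  have m: "cd_measure G H = card H * card H" unfolding cd_measure_def sc ..
  have "card H \<le> card A" using A_maximal[OF H sc] .
  then show "cd_measure G H \<le> card A * card A" unfolding m by (intro mult_le_mono)
  show "cd_measure G H = card A * card A \<Longrightarrow> card H = card A"
    unfolding m using power2_eq_imp_eq[of "card H" "card A"] by (simp add: power2_eq_square)
qed

lemma center_measure_lt_index_p:
  assumes nA: "card (carrier G) = p * card A" and Z: "p^2 * card (grp_center G) < card (carrier G)"
  shows "card (grp_center G) * card (carrier G) < card A * card A"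
proof -
  have "p^2 * (card (grp_center G) * card (carrier G)) < p^2 * (card A * card A)"
    using mult_less_mono1[OF Z card_subgroup_pos[OF subgroup_self]] nA
    by (simp add: power2_eq_square algebra_simps)
  then show ?thesis by simp
qed

lemma self_centralizing_unique_index_p:
  assumes nA: "card (carrier G) = p * card A" and Z: "p^2 * card (grp_center G) < card (carrier G)"
    and H: "subgroup H G" and sc: "centralizer G H = H" and cH: "card H = card A"
  shows "H = A"
proof (rule ccontr)
  assume "H \<noteq> A"
  have Hc: "H \<subseteq> carrier G" and Ac: "A \<subseteq> carrier G"
    using H A_subgroup subgroup.subset by auto
  have "\<not> H \<subseteq> A" using card_subset_eq[OF finite_subgroup[OF A_subgroup]] cH \<open>H \<noteq> A\<close> by blast
  then have "A \<inter> H \<subseteq> grp_center G"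
    using centralizer_Int_subset_grp_center_index_p[OF A_subgroup grp_center_subset_A nA Hc]
      A_self_centralizing sc by simp
  then have "card (A \<inter> H) \<le> card (grp_center G)"
    by (rule card_mono[OF finite_subgroup[OF subgroup_grp_center]])
  moreover have "card (A <#> H) \<le> card (carrier G)"
    using card_mono[OF finite_carrier set_mult_subset_subgroup[OF subgroup_self Ac Hc]] .
  ultimately have "card (A <#> H) * card (A \<inter> H) \<le> card (carrier G) * card (grp_center G)"
    by (rule mult_le_mono[rotated])
  with card_mult_Int_ge[OF finite_carrier A_subgroup H] cH
  have "card A * card A \<le> card (carrier G) * card (grp_center G)" by simp
  with center_measure_lt_index_p[OF nA Z] show False by (simp add: mult.commute)
qed

lemma CD_index_p:
  assumes nA: "card (carrier G) = p * card A" and Z: "p^2 * card (grp_center G) < card (carrier G)"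
  shows "CD G = {A}"
proof -
  let ?n = "card (carrier G)" and ?z = "card (grp_center G)" and ?a = "card A"
  have zn: "?z * ?n < ?a * ?a" using center_measure_lt_index_p[OF nA Z] .
  have closed_cases: "cd_measure G H < ?a * ?a \<or> centralizer G H = H"
    if H: "subgroup H G" and cl: "centralizer G (centralizer G H) = H" for H
  proof -
    consider "centralizer G H = H" | "H = grp_center G" | "H = carrier G"
      | "centralizer G H \<noteq> H" "H \<noteq> grp_center G" "H \<noteq> carrier G" by blast
    then show ?thesis
    proof cases
      case 4
      have "p^2 * (p^2 * cd_measure G H) \<le> p^2 * (?a * ?a)"
        using closed_measure_le[OF H cl 4] nA by (simp add: power2_eq_square power4_eq_xxxx algebra_simps)
      then have "p^2 * cd_measure G H \<le> ?a * ?a" by (meson nat_mult_le_cancel1 p_pos zero_less_power)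
      moreover have "4 * cd_measure G H \<le> p^2 * cd_measure G H"
        using four_le_p_sq by (rule mult_le_mono1)
      ultimately have "4 * cd_measure G H \<le> ?a * ?a" by linarith
      moreover have "0 < ?a * ?a" using card_A_pos by simp
      ultimately show ?thesis by linarith
    qed (use zn in \<open>auto simp: cd_measure_grp_center cd_measure_carrier mult.commute\<close>)
  qed
  show ?thesis
  proof (rule CD_eqI[where M = "?a * ?a"])
    fix H assume H: "subgroup H G" and cl: "centralizer G (centralizer G H) = H"
    then show "cd_measure G H \<le> ?a * ?a"
      using closed_cases self_centralizing_measure(1) by fastforce
    assume "cd_measure G H = ?a * ?a"
    with closed_cases[OF H cl] have "centralizer G H = H" by simp
    with H \<open>cd_measure G H = ?a * ?a\<close> show "H \<in> {A}"
      using self_centralizing_measure(2) self_centralizing_unique_index_p[OF nA Z] by blast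
  qed (use A_subgroup cd_measure_A in auto)
qed

lemma CD_index_p2_small_center:
  assumes nA: "card (carrier G) = p^2 * card A" and Z: "card (carrier G) < p^4 * card (grp_center G)"
  shows "CD G = {grp_center G, carrier G}"
proof -
  let ?n = "card (carrier G)" and ?z = "card (grp_center G)" and ?a = "card A"
  have nz: "?n * ?n < p^4 * (?n * ?z)"
    using mult_less_mono1[OF Z card_subgroup_pos[OF subgroup_self]] by (simp add: algebra_simps)
  then have az: "?a * ?a < ?n * ?z"
    using nA by (simp add: power2_eq_square power4_eq_xxxx algebra_simps)
  have closed_cases: "cd_measure G H < ?n * ?z \<or> H = grp_center G \<or> H = carrier G"
    if H: "subgroup H G" and cl: "centralizer G (centralizer G H) = H" for H
  proof -
    consider "centralizer G H = H" | "H = grp_center G" | "H = carrier G"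
      | "centralizer G H \<noteq> H" "H \<noteq> grp_center G" "H \<noteq> carrier G" by blast
    then show ?thesis
    proof cases
      case 1
      with self_centralizing_measure(1)[OF H] az show ?thesis by simp
    next
      case 4
      then have "p^4 * cd_measure G H \<le> ?n * ?n"
        using closed_measure_le[OF H cl] by (simp add: power2_eq_square)
      then have "p^4 * cd_measure G H < p^4 * (?n * ?z)" using nz by (rule le_less_trans)
      then show ?thesis by simp
    qed simp_all
  qed
  show ?thesis
  proof (rule CD_eqI[where M = "?n * ?z"])
    fix H assume H: "subgroup H G" and cl: "centralizer G (centralizer G H) = H"
    then show "cd_measure G H \<le> ?n * ?z"
      using closed_cases cd_measure_grp_center cd_measure_carrier by fastforce
    show "cd_measure G H = ?n * ?z \<Longrightarrow> H \<in> {grp_center G, carrier G}"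
      using closed_cases[OF H cl] by auto
  qed (auto simp: cd_measure_grp_center cd_measure_carrier subgroup_grp_center subgroup_self)
qed

lemma CD_center_index_p2:
  assumes nz: "card (carrier G) = p^2 * card (grp_center G)"
  shows "\<exists>As :: nat \<Rightarrow> 'a set.
          CD G = {grp_center G, A, carrier G} \<union> As ` {1..p} \<and>
          quasi_antichain (CD G) (p + 1) \<and>
          (\<forall>i\<in>{1..p}. comm_group (G\<lparr>carrier := As i\<rparr>))"
proof -
  let ?n = "card (carrier G)" and ?z = "card (grp_center G)" and ?a = "card A"
  have Y: "grp_center G = carrier G \<inter> centralizer G (carrier G)"
    using centralizer_carrier subgroup.subset[OF subgroup_grp_center] by blast
  have "card {B. subgroup B G \<and> grp_center G \<subseteq> B \<and> B \<subseteq> carrier G \<and> card B = p * ?z} = p + 1"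
    using card_intermediate_subgroups(2)[OF subgroup_self Y nz subset_refl] by simp
  then have "{B. subgroup B G \<and> grp_center G \<subseteq> B \<and> B \<subseteq> carrier G \<and> card B = p * ?z} \<noteq> {}"
    by (metis card.empty add_is_0 zero_neq_one)
  then obtain B where "subgroup B G" "grp_center G \<subseteq> B" "card B = p * ?z" by blast
  with self_centralizing_index_p_over_center[OF nz] have "p * ?z \<le> ?a"
    using A_maximal by metis
  moreover have "?a * ?a \<le> (p * ?z) * (p * ?z)"
    using cd_measure_le_cd_max[OF A_subgroup] cd_max_center_index_p2[OF nz] nz cd_measure_A
    by (simp add: power2_eq_square algebra_simps)
  ultimately have a: "?a = p * ?z" using power2_le_imp_le[of ?a "p * ?z"]
    by (simp add: power2_eq_square)
  have "A \<in> CD G"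
    using in_CD_if_cd_max_le[OF A_subgroup] cd_max_center_index_p2[OF nz] cd_measure_A a nz
    by (simp add: power2_eq_square algebra_simps)
  moreover have "A \<noteq> grp_center G" "A \<noteq> carrier G"
    using a nz card_subgroup_pos[OF subgroup_grp_center] two_le_p by (auto simp: power2_eq_square)
  ultimately show ?thesis
    using CD_quasi_antichain_intermediate[OF subgroup_self Y nz subset_refl CD_center_index_p2_eq[OF nz]]
    by blast
qed

lemma cd_max_index_p2:
  assumes nA: "card (carrier G) = p^2 * card A" and Z: "p^4 * card (grp_center G) \<le> card (carrier G)"
  shows "cd_max G = card A * card A"
proof (rule cd_max_eq_closed[OF _ A_subgroup cd_measure_A])
  let ?n = "card (carrier G)" and ?z = "card (grp_center G)" and ?a = "card A"
  have nn: "?n * ?n = p^4 * (?a * ?a)" using nA by (simp add: power2_eq_square power4_eq_xxxx algebra_simps)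
  fix H assume H: "subgroup H G" and cl: "centralizer G (centralizer G H) = H"
  consider "centralizer G H = H" | "H = grp_center G \<or> H = carrier G"
    | "centralizer G H \<noteq> H" "H \<noteq> grp_center G" "H \<noteq> carrier G" by blast
  then show "cd_measure G H \<le> ?a * ?a"
  proof cases
    case 1
    then show ?thesis by (rule self_centralizing_measure(1)[OF H])
  next
    case 2
    then have m: "cd_measure G H = ?n * ?z" using cd_measure_grp_center cd_measure_carrier by auto
    have "p^4 * (?n * ?z) = ?n * (p^4 * ?z)" by simp
    also have "\<dots> \<le> ?n * ?n" using Z by simp
    also have "\<dots> = p^4 * (?a * ?a)" by (rule nn)
    finally show ?thesis unfolding m using p_pos by simp
  next
    case 3
    with closed_measure_le[OF H cl] nn have "p^4 * cd_measure G H \<le> p^4 * (?a * ?a)"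
      by (simp add: power2_eq_square)
    then show ?thesis using p_pos by simp
  qed
qed

lemma CD_index_p2_cases:
  assumes nA: "card (carrier G) = p^2 * card A" and Z: "p^4 * card (grp_center G) \<le> card (carrier G)"
    and H: "H \<in> CD G"
  shows "(centralizer G H = H \<and> card H = card A) \<or>
    ((H = grp_center G \<or> H = carrier G) \<and> card (carrier G) = p^4 * card (grp_center G)) \<or>
    (H \<subset> centralizer G H \<and> p * card (centralizer G H) = card (carrier G) \<and>
       p^2 * card H = card (centralizer G H)) \<or>
    (centralizer G H \<subset> H \<and> p * card H = card (carrier G) \<and>
       p^2 * card (centralizer G H) = card H) \<or>
    (p^2 * card H = card (carrier G) \<and> p^2 * card (centralizer G H) = card (carrier G) \<and>
       H \<inter> centralizer G H \<subseteq> grp_center G \<and> p^4 * card (H \<inter> centralizer G H) = card (carrier G))"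
proof -
  let ?n = "card (carrier G)" and ?z = "card (grp_center G)" and ?a = "card A"
  have Hs: "subgroup H G" and cl: "centralizer G (centralizer G H) = H" and m: "cd_measure G H = ?a * ?a"
    using H cd_max_index_p2[OF nA Z] unfolding mem_CD_iff by auto
  have eq: "p^4 * cd_measure G H = ?n^2"
    using m nA by (simp add: power2_eq_square power4_eq_xxxx algebra_simps)
  consider (sc) "centralizer G H = H" | (center) "H = grp_center G \<or> H = carrier G"
    | (below) "H \<subset> centralizer G H" "H \<noteq> grp_center G"
    | (above) "centralizer G H \<subset> H" "H \<noteq> carrier G"
    | (incomparable) "\<not> H \<subseteq> centralizer G H" "\<not> centralizer G H \<subseteq> H" by blast
  then show ?thesis
  proof cases
    case sc
    then show ?thesis using self_centralizing_measure(2)[OF Hs sc] m by simp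
  next
    case center
    then have "cd_measure G H = ?n * ?z" using cd_measure_grp_center cd_measure_carrier by auto
    with eq have "?n * (p^4 * ?z) = ?n * ?n" by (simp add: power2_eq_square algebra_simps)
    then have "p^4 * ?z = ?n" using card_subgroup_pos[OF subgroup_self] by simp
    with center show ?thesis by simp
  next
    case below
    with closed_below_measure(2)[OF Hs cl _ _ eq] show ?thesis by blast
  next
    case above
    with closed_above_measure(2)[OF Hs cl _ _ eq] show ?thesis by blast
  next
    case incomparable
    with closed_incomparable_measure(2)[OF Hs cl _ _ eq] show ?thesis by blast
  qed
qed

lemma CD_index_p2_large_cases:
  assumes nA: "card (carrier G) = p^2 * card A" and Z: "p^4 * card (grp_center G) < card (carrier G)"
    and H: "H \<in> CD G"
  shows "(centralizer G H = H \<and> card H = card A) \<or>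
    (H \<subset> centralizer G H \<and> p * card (centralizer G H) = card (carrier G) \<and>
       p^2 * card H = card (centralizer G H)) \<or>
    (centralizer G H \<subset> H \<and> p * card H = card (carrier G) \<and>
       p^2 * card (centralizer G H) = card H)"
proof -
  have "\<not> (H \<inter> centralizer G H \<subseteq> grp_center G \<and>
           p^4 * card (H \<inter> centralizer G H) = card (carrier G))"
  proof
    assume D: "H \<inter> centralizer G H \<subseteq> grp_center G \<and>
                 p^4 * card (H \<inter> centralizer G H) = card (carrier G)"
    then have "card (H \<inter> centralizer G H) \<le> card (grp_center G)"
      using card_mono[OF finite_subgroup[OF subgroup_grp_center]] by blast
    then have "p^4 * card (H \<inter> centralizer G H) \<le> p^4 * card (grp_center G)" by simp
    with D Z show False by linarith
  qed
  with CD_index_p2_cases[OF nA less_imp_le[OF Z] H] Z show ?thesis by auto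
qed

lemma index_p_center_p3_in_CD:
  assumes nA: "card (carrier G) = p^2 * card A" and Z: "p^4 * card (grp_center G) \<le> card (carrier G)"
    and T: "subgroup T G" and cT: "card (carrier G) = p * card T"
    and cY: "card (carrier G) = p^3 * card (sub_center G T)"
  shows "T \<in> CD G" and "sub_center G T \<in> CD G"
proof -
  let ?n = "card (carrier G)" and ?a = "card A" and ?Y = "sub_center G T"
  have Tc: "T \<subseteq> carrier G" using T subgroup.subset by blast
  have Y: "?Y = T \<inter> centralizer G T" using sub_center_eq[OF Tc] .
  have Ys: "subgroup ?Y G" unfolding Y using subgroup_Int_centralizer[OF T] .
  have "p^4 * (card T * card ?Y) = (p * card T) * (p^3 * card ?Y)"
    by (simp add: power4_eq_xxxx power3_eq_cube algebra_simps)
  also have "\<dots> = ?n * ?n" using cT cY by simp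
  also have "\<dots> = p^4 * (?a * ?a)" using nA by (simp add: power2_eq_square power4_eq_xxxx algebra_simps)
  finally have aa: "card T * card ?Y = ?a * ?a" using p_pos by simp
  have cd_max: "cd_max G = ?a * ?a" using cd_max_index_p2[OF nA Z] .
  have "card ?Y \<le> card (centralizer G T)" using card_mono[OF finite_centralizer] Y by blast
  then have "?a * ?a \<le> cd_measure G T" unfolding cd_measure_def aa[symmetric] by simp
  with T cd_max show "T \<in> CD G" by (simp add: in_CD_if_cd_max_le)
  have "card T \<le> card (centralizer G ?Y)"
    using card_mono[OF finite_centralizer centralizer_sub_center[OF Tc]] .
  then have "?a * ?a \<le> cd_measure G ?Y" unfolding cd_measure_def aa[symmetric] by (simp add: mult.commute)
  with Ys cd_max show "?Y \<in> CD G" by (simp add: in_CD_if_cd_max_le)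
qed

lemma card_index_p2_self_centralizing_ge:
  assumes nA: "card (carrier G) = p^2 * card A" and Z: "p^4 * card (grp_center G) \<le> card (carrier G)"
    and T: "subgroup T G" and cT: "card (carrier G) = p * card T"
    and cY: "card (carrier G) = p^3 * card (sub_center G T)"
  shows "p \<le> card {B. subgroup B G \<and> B \<noteq> A \<and> card (carrier G) = p^2 * card B \<and>
                     card (carrier G) = p^2 * card (centralizer G B)}"
    (is "p \<le> card ?As")
proof -
  let ?n = "card (carrier G)" and ?a = "card A"
  define Y where "Y = sub_center G T"
  have Tc: "T \<subseteq> carrier G" using T subgroup.subset by blast
  have Y_eq: "Y = T \<inter> centralizer G T" unfolding Y_def using sub_center_eq[OF Tc] .
  have "centralizer G (centralizer G T) = T"
    using CD_centralizer_centralizer index_p_center_p3_in_CD(1)[OF assms] by blast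
  then have ZY: "grp_center G \<subseteq> Y"
    unfolding Y_eq using grp_center_subset_centralizer[OF centralizer_subset_carrier]
      grp_center_subset_centralizer[OF Tc] by (metis le_inf_iff)
  have "p * card T = ?n" using cT by simp
  also have "\<dots> = p * (p^2 * card Y)"
    using cY unfolding Y_def by (simp add: power2_eq_square power3_eq_cube mult.assoc)
  finally have cT': "card T = p^2 * card Y" using p_pos by simp
  define F where "F = {B. subgroup B G \<and> Y \<subseteq> B \<and> B \<subseteq> T \<and> card B = p * card Y}"
  have "finite F" "card F = p + 1"
    using card_intermediate_subgroups[OF T Y_eq cT' ZY] unfolding F_def by blast+
  then have "p \<le> card (F - {A})" by (simp add: card_Diff_singleton_if)
  moreover have "F - {A} \<subseteq> ?As"
  proof
    fix B assume "B \<in> F - {A}"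
    then have B: "subgroup B G" "Y \<subseteq> B" "B \<subseteq> T" "card B = p * card Y" "B \<noteq> A"
      unfolding F_def by auto
    have "Y \<subseteq> centralizer G B" using Y_eq centralizer_antimono[OF B(3)] by blast
    with B have BC: "B \<subseteq> centralizer G B" using abelian_if_index_p_over_central ZY by blast
    have nB: "?n = p^2 * card B" using cY B(4) unfolding Y_def by (simp add: power2_eq_square power3_eq_cube)
    then have "card B = ?a" using nA p_pos by simp
    then have "card (centralizer G B) \<le> card B"
      using cd_measure_le_cd_max[OF B(1)] cd_max_index_p2[OF nA Z] card_A_pos
      unfolding cd_measure_def by simp
    with BC have "card (centralizer G B) = card B" using card_mono[OF finite_centralizer] by (metis le_antisym)
    with B nB show "B \<in> ?As" by simp
  qed
  moreover have "finite ?As" using finite_subset[of ?As "Pow (carrier G)"] finite_carrier subgroup.subset by blast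
  ultimately show ?thesis by (meson card_mono order_trans)
qed

lemma index_p2_centralizer_index_p2_in_CD:
  assumes nA: "card (carrier G) = p^2 * card A" and Z: "p^4 * card (grp_center G) \<le> card (carrier G)"
    and B: "subgroup B G" "card (carrier G) = p^2 * card B"
      "card (carrier G) = p^2 * card (centralizer G B)"
  shows "B \<in> CD G"
proof -
  have "p^4 * cd_measure G B = (p^2 * card B) * (p^2 * card (centralizer G B))"
    unfolding cd_measure_def by (simp add: power2_eq_square power4_eq_xxxx algebra_simps)
  also have "\<dots> = p^2 * card A * (p^2 * card A)" by (simp only: B(2,3)[symmetric] nA)
  finally have "cd_measure G B = card A * card A"
    using p_pos by (simp add: power2_eq_square power4_eq_xxxx algebra_simps)
  with B(1) cd_max_index_p2[OF nA Z] show ?thesis by (simp add: in_CD_if_cd_max_le)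
qed

lemma CD_subset_center_index_p4:
  assumes nA: "card (carrier G) = p^2 * card A" and nz: "card (carrier G) = p^4 * card (grp_center G)"
    and H: "H \<in> CD G"
  shows "H \<in> {grp_center G, A, carrier G} \<union>
    sub_center G ` {T. subgroup T G \<and> card (carrier G) = p * card T \<and>
                        card (carrier G) = p^3 * card (sub_center G T)} \<union>
    {B. subgroup B G \<and> B \<noteq> A \<and> card (carrier G) = p^2 * card B \<and>
        card (carrier G) = p^2 * card (centralizer G B)} \<union>
    {T. subgroup T G \<and> card (carrier G) = p * card T \<and>
        card (carrier G) = p^3 * card (sub_center G T)}"
proof -
  let ?n = "card (carrier G)"
  have Hs: "subgroup H G" and cl: "centralizer G (centralizer G H) = H"
    using H unfolding mem_CD_iff by auto
  have "p^4 * card (grp_center G) \<le> ?n" using nz by simp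
  from CD_index_p2_cases[OF nA this H] show ?thesis
  proof (elim disjE conjE)
    assume "centralizer G H = H" "card H = card A"
    with nA Hs show ?thesis by simp
  next
    assume "H \<subset> centralizer G H" "p * card (centralizer G H) = ?n"
      "p^2 * card H = card (centralizer G H)"
    from index_p_center_p3_centralizer[OF Hs cl this]
    have "centralizer G H \<in> {T. subgroup T G \<and> ?n = p * card T \<and> ?n = p^3 * card (sub_center G T)}"
      and "H = sub_center G (centralizer G H)" by auto
    then show ?thesis by blast
  next
    assume "centralizer G H \<subset> H" "p * card H = ?n" "p^2 * card (centralizer G H) = card H"
    from index_p_center_p3_self[OF Hs this] Hs
    have "H \<in> {T. subgroup T G \<and> ?n = p * card T \<and> ?n = p^3 * card (sub_center G T)}" by blast
    then show ?thesis by blast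
  next
    assume "p^2 * card H = ?n" "p^2 * card (centralizer G H) = ?n"
    with Hs show ?thesis by auto
  qed auto
qed

lemma CD_index_p2_center_index_p4:
  assumes nA: "card (carrier G) = p^2 * card A" and nz: "card (carrier G) = p^4 * card (grp_center G)"
  shows "let Ts = {T. subgroup T G \<and> card (carrier G) = p * card T \<and>
                      card (carrier G) = p^3 * card (sub_center G T)};
             As = {B. subgroup B G \<and> B \<noteq> A \<and> card (carrier G) = p^2 * card B \<and>
                      card (carrier G) = p^2 * card (centralizer G B)}
         in CD G = {grp_center G, A, carrier G} \<union> sub_center G ` Ts \<union> As \<union> Ts \<and>
            (Ts \<noteq> {} \<longrightarrow> card As \<ge> p)"
proof -
  let ?n = "card (carrier G)" and ?z = "card (grp_center G)" and ?a = "card A"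
  define Ts where "Ts = {T. subgroup T G \<and> ?n = p * card T \<and> ?n = p^3 * card (sub_center G T)}"
  define As where "As = {B. subgroup B G \<and> B \<noteq> A \<and> ?n = p^2 * card B \<and> ?n = p^2 * card (centralizer G B)}"
  have Z: "p^4 * ?z \<le> ?n" using nz by simp
  have cd_max: "cd_max G = ?a * ?a" using cd_max_index_p2[OF nA Z] .
  have "p^4 * (?n * ?z) = ?n * ?n" using nz by (simp add: algebra_simps)
  also have "\<dots> = p^4 * (?a * ?a)" using nA by (simp add: power2_eq_square power4_eq_xxxx algebra_simps)
  finally have center: "?n * ?z = ?a * ?a" using p_pos by simp
  have "grp_center G \<in> CD G"
    using in_CD_if_cd_max_le[OF subgroup_grp_center] cd_max center cd_measure_grp_center by simp
  moreover have "carrier G \<in> CD G"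
    using in_CD_if_cd_max_le[OF subgroup_self] cd_max center cd_measure_carrier by simp
  moreover have "A \<in> CD G"
    using in_CD_if_cd_max_le[OF A_subgroup] cd_max cd_measure_A by simp
  moreover have "T \<in> CD G \<and> sub_center G T \<in> CD G" if "T \<in> Ts" for T
    using that index_p_center_p3_in_CD[OF nA Z] unfolding Ts_def by blast
  moreover have "B \<in> CD G" if "B \<in> As" for B
    using that index_p2_centralizer_index_p2_in_CD[OF nA Z] unfolding As_def by blast
  ultimately have "{grp_center G, A, carrier G} \<union> sub_center G ` Ts \<union> As \<union> Ts \<subseteq> CD G" by blast
  moreover have "CD G \<subseteq> {grp_center G, A, carrier G} \<union> sub_center G ` Ts \<union> As \<union> Ts"
    using CD_subset_center_index_p4[OF nA nz] unfolding Ts_def As_def by blast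
  ultimately have "CD G = {grp_center G, A, carrier G} \<union> sub_center G ` Ts \<union> As \<union> Ts" by blast
  moreover have "p \<le> card As" if ne: "Ts \<noteq> {}"
  proof -
    obtain T where "T \<in> Ts" using ne by blast
    then show ?thesis
      using card_index_p2_self_centralizing_ge[OF nA Z] unfolding Ts_def As_def by blast
  qed
  ultimately show ?thesis unfolding Let_def Ts_def[symmetric] As_def[symmetric] by blast
qed

lemma CD_index_p2_without_T:
  assumes nA: "card (carrier G) = p^2 * card A" and Z: "p^4 * card (grp_center G) < card (carrier G)"
    and noT: "\<not> (\<exists>T. subgroup T G \<and> card (carrier G) = p * card T \<and>
                    card (carrier G) = p^3 * card (sub_center G T))"
  shows "CD G = {A}"
proof -
  have self_centralizing: "centralizer G H = H \<and> card H = card A" if H: "H \<in> CD G" for H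
  proof -
    have Hs: "subgroup H G" and cl: "centralizer G (centralizer G H) = H"
      using H unfolding mem_CD_iff by auto
    from CD_index_p2_large_cases[OF nA Z H] show ?thesis
    proof (elim disjE conjE)
      assume "H \<subset> centralizer G H" "p * card (centralizer G H) = card (carrier G)"
        "p^2 * card H = card (centralizer G H)"
      from index_p_center_p3_centralizer[OF Hs cl this] noT show ?thesis by blast
    next
      assume "centralizer G H \<subset> H" "p * card H = card (carrier G)"
        "p^2 * card (centralizer G H) = card H"
      from index_p_center_p3_self[OF Hs this] Hs noT show ?thesis by blast
    qed auto
  qed
  have A: "A \<in> CD G"
    using in_CD_if_cd_max_le[OF A_subgroup] cd_max_index_p2[OF nA less_imp_le[OF Z]] cd_measure_A
    by simp
  have "H = A" if H: "H \<in> CD G" for H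
  proof -
    have "card (H \<inter> A) = card A" using self_centralizing[OF CD_Int[OF H A]] by blast
    then have "A \<subseteq> H" using card_subset_eq[OF finite_subgroup[OF A_subgroup], of "H \<inter> A"] by blast
    moreover have "finite H" "card H = card A"
      using H self_centralizing[OF H] finite_subgroup unfolding mem_CD_iff by auto
    ultimately show "H = A" using card_subset_eq by metis
  qed
  with A show ?thesis by blast
qed

context
  fixes T :: "'a set"
  assumes nA: "card (carrier G) = p^2 * card A"
    and Z: "p^4 * card (grp_center G) < card (carrier G)"
    and T: "subgroup T G" and cT: "card (carrier G) = p * card T"
    and cY: "card (carrier G) = p^3 * card (sub_center G T)"
begin

lemma T_in_CD: "T \<in> CD G"
  using index_p_center_p3_in_CD(1)[OF nA less_imp_le[OF Z] T cT cY] .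

lemma sub_center_T_in_CD: "sub_center G T \<in> CD G"
  using index_p_center_p3_in_CD(2)[OF nA less_imp_le[OF Z] T cT cY] .

lemma card_T_sub_center: "card T = p^2 * card (sub_center G T)"
proof -
  have "p * card T = card (carrier G)" using cT by simp
  also have "\<dots> = p * (p^2 * card (sub_center G T))"
    using cY by (simp add: power2_eq_square power3_eq_cube mult.assoc)
  finally show ?thesis using p_pos by simp
qed

lemma card_A_sub_center: "card A = p * card (sub_center G T)"
proof -
  have "p^2 * card A = card (carrier G)" using nA by simp
  also have "\<dots> = p^2 * (p * card (sub_center G T))"
    using cY by (simp add: power2_eq_square power3_eq_cube mult.assoc)
  finally show ?thesis using p_pos by simp
qed

lemma card_sub_center_T_pos: "0 < card (sub_center G T)"
  using card_subgroup_pos[OF subgroup_Int_centralizer[OF T]] sub_center_eq[OF subgroup.subset[OF T]]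
  by simp

lemma centralizer_T: "centralizer G T = sub_center G T"
proof -
  let ?y = "card (sub_center G T)"
  from CD_index_p2_large_cases[OF nA Z T_in_CD] show ?thesis
  proof (elim disjE conjE)
    assume "card T = card A"
    moreover have "card T = p * card A"
      using card_T_sub_center card_A_sub_center by (simp add: power2_eq_square)
    ultimately show ?thesis using card_A_pos two_le_p by simp
  next
    assume "T \<subset> centralizer G T" "p * card (centralizer G T) = card (carrier G)"
    have "card T < card (centralizer G T)"
      using psubset_card_mono[OF finite_centralizer \<open>T \<subset> centralizer G T\<close>] .
    moreover have "card (centralizer G T) = card T"
      using \<open>p * card (centralizer G T) = card (carrier G)\<close> cT p_pos by simp
    ultimately show ?thesis by simp
  next
    assume "centralizer G T \<subset> T"
    then show ?thesis using sub_center_eq[OF subgroup.subset[OF T]] by auto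
  qed
qed

lemma centralizer_sub_center_T: "centralizer G (sub_center G T) = T"
  using CD_centralizer_centralizer[OF T_in_CD] centralizer_T by simp

lemma grp_center_subset_sub_center_T: "grp_center G \<subseteq> sub_center G T"
  using grp_center_subset_centralizer[OF subgroup.subset[OF T]] centralizer_T by simp

lemma Int_index_p_member_self_centralizing:
  assumes T': "T' \<in> CD G" and cT': "card T' = card T" and "T' \<noteq> T"
  shows "centralizer G (T \<inter> T') = T \<inter> T' \<and> card (T \<inter> T') = card A"
proof -
  let ?I = "T \<inter> T'" and ?n = "card (carrier G)"
  have IC: "?I \<in> CD G" using CD_Int[OF T_in_CD T'] .
  have T's: "subgroup T' G" using T' unfolding CD_def by blast
  have I: "0 < card ?I" using card_subgroup_pos subgroups_Inter_pair[OF T T's] by blast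
  have "\<not> T \<subseteq> T'" using card_subset_eq[OF finite_subgroup[OF T's]] cT' \<open>T' \<noteq> T\<close> by metis
  then have I_lt: "card ?I < card T" using psubset_card_mono[OF finite_subgroup[OF T]] by blast
  have "card T * card T \<le> card (T <#> T') * card ?I"
    using card_mult_Int_ge[OF finite_carrier T T's] cT' by simp
  also have "\<dots> \<le> ?n * card ?I"
    using card_mono[OF finite_carrier set_mult_subset_subgroup[OF subgroup_self]]
      subgroup.subset[OF T] subgroup.subset[OF T's] by simp
  finally have "card T * card T \<le> card T * (p * card ?I)" using cT by (simp add: algebra_simps)
  then have T_le: "card T \<le> p * card ?I" using card_subgroup_pos[OF T] by simp
  from CD_index_p2_large_cases[OF nA Z IC] show ?thesis
  proof (elim disjE conjE)
    assume C: "p * card (centralizer G ?I) = ?n" "p^2 * card ?I = card (centralizer G ?I)"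
    have "p * (p * (p * card ?I)) = p * card (centralizer G ?I)"
      using C(2) by (simp add: power2_eq_square mult.assoc)
    also have "\<dots> = p * card T" using C(1) cT by simp
    finally have "p * (p * card ?I) = card T" using p_pos by simp
    then have "p * (p * card ?I) \<le> 1 * (p * card ?I)" using T_le by simp
    then have "p \<le> 1" using p_pos I by (metis mult_le_cancel2 nat_0_less_mult_iff)
    with two_le_p show ?thesis by simp
  next
    assume "p * card ?I = ?n"
    with cT I_lt p_pos show ?thesis by simp
  qed auto
qed

lemma index_p_member_unique:
  assumes T': "T' \<in> CD G" and "centralizer G T' \<subset> T'"
    and cT': "p * card T' = card (carrier G)" and cC: "p^2 * card (centralizer G T') = card T'"
  shows "T' = T"
proof (rule ccontr)
  assume "T' \<noteq> T"
  let ?Y = "sub_center G T" and ?I = "T \<inter> T'" and ?C' = "centralizer G T'"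
  have T's: "subgroup T' G" using T' unfolding CD_def by blast
  have "card T' = card T" using cT' cT p_pos by simp
  note I = Int_index_p_member_self_centralizing[OF T' this \<open>T' \<noteq> T\<close>]
  have "\<not> T' \<subseteq> T"
    using card_subset_eq[OF finite_subgroup[OF T]] \<open>card T' = card T\<close> \<open>T' \<noteq> T\<close> by blast
  have Is: "subgroup ?I G" using subgroups_Inter_pair[OF T T's] .
  have YI: "?Y \<subseteq> ?I" using centralizer_antimono[of ?I T] I centralizer_T by auto
  have CI: "?C' \<subseteq> ?I" using centralizer_antimono[of ?I T'] I by auto
  have "p^2 * card ?C' = p^2 * card ?Y" using cC \<open>card T' = card T\<close> card_T_sub_center by simp
  then have cC': "card ?C' = card ?Y" using p_pos by simp
  \<comment> \<open>Z(T) and C(T') lie in T \<inter> T', of order |A|, and meet inside Z(G); by the product formula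
    this forces |Z(T)| \<le> p |Z(G)|, contradicting |G : Z(G)| > p^4\<close>
  have "grp_center G \<subseteq> T"
    using grp_center_subset_sub_center_T sub_center_eq[OF subgroup.subset[OF T]] by blast
  from centralizer_Int_subset_grp_center_index_p[OF T this cT subgroup.subset[OF T's] \<open>\<not> T' \<subseteq> T\<close>]
  have "?Y \<inter> ?C' \<subseteq> grp_center G" using centralizer_T by simp
  then have "card (?Y \<inter> ?C') \<le> card (grp_center G)"
    by (rule card_mono[OF finite_subgroup[OF subgroup_grp_center]])
  moreover have "card (?Y <#> ?C') \<le> card ?I"
    using card_mono[OF finite_subgroup[OF Is] set_mult_subset_subgroup[OF Is YI CI]] .
  moreover have "card ?Y * card ?C' \<le> card (?Y <#> ?C') * card (?Y \<inter> ?C')"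
    using card_mult_Int_ge[OF finite_carrier] sub_center_T_in_CD subgroup_centralizer
      subgroup.subset[OF T's] unfolding CD_def by blast
  ultimately have "card ?Y * card ?Y \<le> card A * card (grp_center G)"
    using I cC' by (metis (no_types, lifting) mult_le_mono order_trans)
  then have "card ?Y * card ?Y \<le> card ?Y * (p * card (grp_center G))"
    using card_A_sub_center by (simp add: algebra_simps)
  then have "card ?Y \<le> p * card (grp_center G)" using card_sub_center_T_pos by simp
  then have "p^3 * card ?Y \<le> p^3 * (p * card (grp_center G))" by simp
  then show False using cY Z by (simp add: power3_eq_cube power4_eq_xxxx algebra_simps)
qed

lemma below_member_unique:
  assumes H: "H \<in> CD G" and "H \<subset> centralizer G H"
    and "p * card (centralizer G H) = card (carrier G)" and "p^2 * card H = card (centralizer G H)"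
  shows "H = sub_center G T"
proof -
  have cl: "centralizer G (centralizer G H) = H" using CD_centralizer_centralizer[OF H] .
  have "centralizer G H = T"
    using index_p_member_unique[OF centralizer_in_CD[OF H]] assms(2-4) cl by simp
  then show ?thesis using cl centralizer_T by simp
qed

lemma self_centralizing_member_between:
  assumes B: "B \<in> CD G" and sc: "centralizer G B = B" and cB: "card B = card A"
  shows "sub_center G T \<subseteq> B \<and> B \<subseteq> T"
proof -
  have Bs: "subgroup B G" using B unfolding CD_def by blast
  have "B \<subseteq> T"
  proof (rule ccontr)
    assume "\<not> B \<subseteq> T"
    let ?J = "B \<inter> T"
    have J: "?J \<in> CD G" using CD_Int[OF B T_in_CD] .
    have J_lt: "card ?J < card A"
      using psubset_card_mono[OF finite_subgroup[OF Bs]] \<open>\<not> B \<subseteq> T\<close> cB by (metis Int_lower1 psubsetI inf.absorb_iff1)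
    from CD_index_p2_large_cases[OF nA Z J] show False
    proof (elim disjE conjE)
      assume "?J \<subset> centralizer G ?J" "p * card (centralizer G ?J) = card (carrier G)"
        "p^2 * card ?J = card (centralizer G ?J)"
      with below_member_unique[OF J] have "centralizer G ?J = T" using centralizer_sub_center_T by simp
      moreover have "B \<subseteq> centralizer G ?J" using centralizer_antimono[of ?J B] sc by blast
      ultimately show False using \<open>\<not> B \<subseteq> T\<close> by simp
    next
      assume "p * card ?J = card (carrier G)"
      then have "card ?J = p * card A" using nA p_pos by (simp add: power2_eq_square)
      with J_lt p_pos show False by simp
    qed (use J_lt in auto)
  qed
  moreover have "sub_center G T \<subseteq> B"
    using centralizer_antimono[OF \<open>B \<subseteq> T\<close>] sc centralizer_T by simp
  ultimately show ?thesis by blast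
qed

lemma CD_with_T:
  "CD G = {sub_center G T, T} \<union>
     {B. subgroup B G \<and> sub_center G T \<subseteq> B \<and> B \<subseteq> T \<and> card B = p * card (sub_center G T)}"
  (is "CD G = {?Y, T} \<union> ?F")
proof
  show "CD G \<subseteq> {?Y, T} \<union> ?F"
  proof
    fix H assume H: "H \<in> CD G"
    then have Hs: "subgroup H G" unfolding CD_def by blast
    from CD_index_p2_large_cases[OF nA Z H] show "H \<in> {?Y, T} \<union> ?F"
    proof (elim disjE conjE)
      assume "centralizer G H = H" "card H = card A"
      with self_centralizing_member_between[OF H] Hs card_A_sub_center show ?thesis by simp
    next
      assume "H \<subset> centralizer G H" "p * card (centralizer G H) = card (carrier G)"
        "p^2 * card H = card (centralizer G H)"
      with below_member_unique[OF H] show ?thesis by simp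
    next
      assume "centralizer G H \<subset> H" "p * card H = card (carrier G)"
        "p^2 * card (centralizer G H) = card H"
      with index_p_member_unique[OF H] show ?thesis by simp
    qed
  qed
  have "B \<in> CD G" if B: "B \<in> ?F" for B
  proof -
    have Bs: "subgroup B G" and "?Y \<subseteq> B" "B \<subseteq> T" and cB: "card B = p * card ?Y"
      using B by auto
    moreover have "?Y \<subseteq> centralizer G B" using centralizer_antimono[OF \<open>B \<subseteq> T\<close>] centralizer_T by simp
    ultimately have "B \<subseteq> centralizer G B"
      using abelian_if_index_p_over_central grp_center_subset_sub_center_T by blast
    then have "card B * card B \<le> cd_measure G B"
      unfolding cd_measure_def using card_mono[OF finite_centralizer] by simp
    with Bs cB card_A_sub_center cd_max_index_p2[OF nA less_imp_le[OF Z]] show ?thesis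
      by (simp add: in_CD_if_cd_max_le)
  qed
  then show "{?Y, T} \<union> ?F \<subseteq> CD G" using T_in_CD sub_center_T_in_CD by blast
qed

lemma CD_index_p2_with_T:
  "\<exists>As :: nat \<Rightarrow> 'a set.
     CD G = {sub_center G T, A, T} \<union> As ` {1..p} \<and>
     quasi_antichain (CD G) (p + 1) \<and>
     (\<forall>j\<in>{1..p}. comm_group (G\<lparr>carrier := As j\<rparr>))"
proof (rule CD_quasi_antichain_intermediate[OF T _ card_T_sub_center grp_center_subset_sub_center_T CD_with_T])
  show "sub_center G T = T \<inter> centralizer G T" using sub_center_eq[OF subgroup.subset[OF T]] .
  show "A \<in> CD G"
    using in_CD_if_cd_max_le[OF A_subgroup] cd_max_index_p2[OF nA less_imp_le[OF Z]] cd_measure_A by simp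
  show "A \<noteq> sub_center G T" "A \<noteq> T"
    using card_A_sub_center card_T_sub_center card_sub_center_T_pos two_le_p by (auto simp: power2_eq_square)
qed

end

end

theorem theorem2p1:
  fixes G :: "('a, 'b) monoid_scheme" and p :: nat and A :: "'a set"
  assumes grp: "group G" and fin: "finite (carrier G)" and pr: "Factorial_Ring.prime p"
    and A_sub: "subgroup A G" and A_sc: "centralizer G A = A"
    and A_max: "\<And>B. subgroup B G \<Longrightarrow> centralizer G B = B \<Longrightarrow> card B \<le> card A"
  shows
  \<comment> \<open>(1)\<close>
  "(comm_group G \<longrightarrow> CD G = {carrier G})
  \<comment> \<open>(2)\<close>
   \<and> (card (carrier G) = p^2 * card (grp_center G) \<longrightarrow>
       (\<exists>As :: nat \<Rightarrow> 'a set.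
          CD G = {grp_center G, A, carrier G} \<union> As ` {1..p} \<and>
          quasi_antichain (CD G) (p + 1) \<and>
          (\<forall>i\<in>{1..p}. comm_group (G\<lparr>carrier := As i\<rparr>))))
  \<comment> \<open>(3)\<close>
   \<and> (\<forall>i::nat. card (carrier G) = p * card A \<and> card (carrier G) = p^i * card (grp_center G) \<and> i > 2
         \<longrightarrow> CD G = {A})
   \<and> (smallest_prime_divisor p (card (carrier G)) \<and> card (carrier G) = p * card A \<and>
       card (carrier G) > p^2 * card (grp_center G) \<longrightarrow> CD G = {A})
  \<comment> \<open>(4)\<close>
   \<and> (card (carrier G) = p^2 * card A \<longrightarrow>
      \<comment> \<open>(4a)\<close>
      (card (carrier G) = p^3 * card (grp_center G) \<longrightarrow> CD G = {grp_center G, carrier G})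
    \<and> (smallest_prime_divisor p (card (carrier G)) \<and>
        p^2 * card (grp_center G) < card (carrier G) \<and> card (carrier G) < p^4 * card (grp_center G)
        \<longrightarrow> CD G = {grp_center G, carrier G})
      \<comment> \<open>(4b)\<close>
    \<and> (card (carrier G) = p^4 * card (grp_center G) \<longrightarrow>
        (let Ts = {T. subgroup T G \<and> card (carrier G) = p * card T \<and>
                      card (carrier G) = p^3 * card (sub_center G T)};
             As = {B. subgroup B G \<and> B \<noteq> A \<and> card (carrier G) = p^2 * card B \<and>
                      card (carrier G) = p^2 * card (centralizer G B)}
         in CD G = {grp_center G, A, carrier G} \<union> sub_center G ` Ts \<union> As \<union> Ts \<and>
            (Ts \<noteq> {} \<longrightarrow> card As \<ge> p)))
      \<comment> \<open>(4c)\<close>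
    \<and> (\<forall>i::nat. \<forall>T. card (carrier G) = p^i * card (grp_center G) \<and> i > 4 \<and>
          subgroup T G \<and> card (carrier G) = p * card T \<and>
          card (carrier G) = p^3 * card (sub_center G T) \<longrightarrow>
          (\<exists>As :: nat \<Rightarrow> 'a set.
             CD G = {sub_center G T, A, T} \<union> As ` {1..p} \<and>
             quasi_antichain (CD G) (p + 1) \<and>
             (\<forall>j\<in>{1..p}. comm_group (G\<lparr>carrier := As j\<rparr>))))
    \<and> (\<forall>T. smallest_prime_divisor p (card (carrier G)) \<and>
          card (carrier G) > p^4 * card (grp_center G) \<and>
          subgroup T G \<and> card (carrier G) = p * card T \<and>
          card (carrier G) = p^3 * card (sub_center G T) \<longrightarrow>
          (\<exists>As :: nat \<Rightarrow> 'a set.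
             CD G = {sub_center G T, A, T} \<union> As ` {1..p} \<and>
             quasi_antichain (CD G) (p + 1) \<and>
             (\<forall>j\<in>{1..p}. comm_group (G\<lparr>carrier := As j\<rparr>))))
      \<comment> \<open>(4d)\<close>
    \<and> (\<forall>i::nat. card (carrier G) = p^i * card (grp_center G) \<and> i > 4 \<and>
          \<not> (\<exists>T. subgroup T G \<and> card (carrier G) = p * card T \<and>
                 card (carrier G) = p^3 * card (sub_center G T))
          \<longrightarrow> CD G = {A})
    \<and> (smallest_prime_divisor p (card (carrier G)) \<and>
          card (carrier G) > p^4 * card (grp_center G) \<and>
          \<not> (\<exists>T. subgroup T G \<and> card (carrier G) = p * card T \<and>
                 card (carrier G) = p^3 * card (sub_center G T))
          \<longrightarrow> CD G = {A}))"
proof -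
  interpret finite_group G
    using grp fin by (intro finite_group.intro finite_group_axioms.intro)
  let ?n = "card (carrier G)" and ?z = "card (grp_center G)"
  have maximal: "maximal_self_centralizing G p A" if "index_gap_group G p"
    using that A_sub A_sc A_max
    by (intro maximal_self_centralizing.intro maximal_self_centralizing_axioms.intro)
  have by_power: "maximal_self_centralizing G p A" if "?n = p^i * ?z" for i
    using maximal index_gap_group_if_center_index_prime_power[OF pr that] by blast
  have by_smallest: "maximal_self_centralizing G p A" if "smallest_prime_divisor p ?n"
    using maximal index_gap_group_if_smallest_prime_divisor[OF that] by blast
  have power_mono: "p^i * ?z < p^k * ?z" if "i < k" for i k
    using power_strict_increasing[OF that prime_gt_1_nat[OF pr]]
      card_subgroup_pos[OF subgroup_grp_center] by simp
  show ?thesis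
    apply (intro conjI impI allI; (elim conjE)?)
    subgoal by (rule CD_comm_group)
    subgoal by (rule maximal_self_centralizing.CD_center_index_p2[OF by_power])
    subgoal premises prems for i
      using maximal_self_centralizing.CD_index_p[OF by_power[OF prems(2)] prems(1)]
        power_mono[OF prems(3)] prems(2) by simp
    subgoal by (rule maximal_self_centralizing.CD_index_p[OF by_smallest])
    subgoal premises prems
      using maximal_self_centralizing.CD_index_p2_small_center[OF by_power[OF prems(2)] prems(1)]
        power_mono[of 3 4] prems(2) by simp
    subgoal by (rule maximal_self_centralizing.CD_index_p2_small_center[OF by_smallest])
    subgoal by (rule maximal_self_centralizing.CD_index_p2_center_index_p4[OF by_power])
    subgoal premises prems for i T
      using maximal_self_centralizing.CD_index_p2_with_T[OF by_power[OF prems(2)] prems(1) _ prems(4-6)]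
        power_mono[OF prems(3)] prems(2) by simp
    subgoal by (rule maximal_self_centralizing.CD_index_p2_with_T[OF by_smallest])
    subgoal premises prems for i
      using maximal_self_centralizing.CD_index_p2_without_T[OF by_power[OF prems(2)] prems(1) _ prems(4)]
        power_mono[OF prems(3)] prems(2) by simp
    subgoal by (rule maximal_self_centralizing.CD_index_p2_without_T[OF by_smallest])
    done
qed

end
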